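(* Let $k=k_0m$ with $k_0\ge1$. For any initial condition $(X(0),Y(0),V_{s,\alpha}(0),W_{s,\alpha}(0))\in\mathcal M^\bullet$, the flow at time $t$ of the Hamiltonian vector field $f\mapsto\{\tfrac1k\operatorname{tr}(Y^k),f\}$ is $X(t)=X(0)\exp(-tY(0)^k)+Y(0)^{-1}\big[\exp(-tY(0)^k)-1_{\rm cyc}\big]$, $Y(t)=Y(0)$, $V_{s,\alpha}(t)=V_{s,\alpha}(0)$, $W_{s,\alpha}(t)=W_{s,\alpha}(0)$, where the term $Y(0)^{-1}[\exp(-tY(0)^k)-1_{\rm cyc}]$ denotes the power series in non-negative powers of $Y(0)$ obtained by expanding the exponential (so no invertibility of $Y(0)$ is required). Equivalently, the vector field is $\frac{dX}{dt}=-Y^{k-1}-XY^k$, $\frac{dY}{dt}=0$, $\frac{dV_{s,\alpha}}{dt}=0$, $\frac{dW_{s,\alpha}}{dt}=0$.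
   Context: Fix integers $m\ge2$, $n\ge1$ and $\mathbf d=(d_0,\dots,d_{m-1})\in\mathbb N^m$ with $d_0\ge1$. Indices $r,s$ range over $\mathbb Z_m$, identified with $\{0,\dots,m-1\}$ with its usual order; Kronecker deltas of such indices are taken modulo $m$. A spin index is a pair $(s,\alpha)$ with $s\in\mathbb Z_m$, $1\le\alpha\le d_s$. $\mathcal M^\bullet$ is the smooth affine variety of tuples $(X_s,Y_s,V_{s,\alpha},W_{s,\alpha})$, $X_s,Y_s\in\mathrm{Mat}(n\times n,\mathbb C)$, $V_{s,\alpha}\in\mathrm{Mat}(1\times n,\mathbb C)$, $W_{s,\alpha}\in\mathrm{Mat}(n\times1,\mathbb C)$, with $\mathrm{Id}_n+X_sY_s$, $\mathrm{Id}_n+Y_sX_s$, $\mathrm{Id}_n+W_{s,\alpha}V_{s,\alpha}$ invertible and $1+V_{s,\alpha}W_{s,\alpha}\ne0$. $X=\sum_sX_s$ is the $nm\times nm$ block matrix whose only nonzero $n\times n$ blocks are $X_s$ in block position $(s,s+1)$; $Y=\sum_sY_s$ has $Y_s$ in block position $(s+1,s)$; $1_{\rm cyc}=\mathrm{Id}_{nm}$. For a function $F$, the Hamiltonian vector field is $f\mapsto\{F,f\}$ and its flow is the solution of $\frac{d}{dt}f=\{F,f\}$ for all entry functions $f$ (applied entrywise to matrices). The quasi-Poisson bracket $\{-,-\}$ on $\mathcal M^\bullet$ is the antisymmetric biderivation given on entry functions by ($o(s,r)=\operatorname{sgn}(r-s)$ computed in $\{0,\dots,m-1\}$, $o(\alpha,\beta)=\operatorname{sgn}(\beta-\alpha)$):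 $\{(X_r)_{ij},(X_s)_{kl}\}=\tfrac12\delta_{s,r-1}(X_{r-1}X_r)_{kj}\delta_{il}-\tfrac12\delta_{s,r+1}\delta_{kj}(X_rX_{r+1})_{il}$; $\{(Y_r)_{ij},(Y_s)_{kl}\}=\tfrac12\delta_{s,r-1}\delta_{kj}(Y_rY_{r-1})_{il}-\tfrac12\delta_{s,r+1}(Y_{r+1}Y_r)_{kj}\delta_{il}$; $\{(X_r)_{ij},(Y_s)_{kl}\}=\delta_{sr}\big(\delta_{kj}\delta_{il}+\tfrac12(Y_rX_r)_{kj}\delta_{il}+\tfrac12\delta_{kj}(X_rY_r)_{il}\big)-\tfrac12\delta_{s,r-1}(X_r)_{kj}(Y_{r-1})_{il}+\tfrac12\delta_{s,r+1}(Y_{r+1})_{kj}(X_r)_{il}$; $\{(X_r)_{ij},(W_{s,\alpha})_k\}=\tfrac12\delta_{s,r+1}\delta_{kj}(X_rW_{r+1,\alpha})_i-\tfrac12\delta_{rs}(X_r)_{kj}(W_{r,\alpha})_i$; $\{(X_r)_{ij},(V_{s,\alpha})_l\}=\tfrac12\delta_{rs}(V_{r,\alpha}X_r)_j\delta_{il}-\tfrac12\delta_{s,r+1}(V_{r+1,\alpha})_j(X_r)_{il}$; $\{(Y_r)_{ij},(W_{s,\alpha})_k\}=\tfrac12\delta_{rs}\delta_{kj}(Y_rW_{r,\alpha})_i-\tfrac12\delta_{s,r+1}(Y_r)_{kj}(W_{r+1,\alpha})_i$; $\{(Y_r)_{ij},(V_{s,\alpha})_l\}=\tfrac12\delta_{s,r+1}(V_{r+1,\alpha}Y_r)_j\delta_{il}-\tfrac12\delta_{rs}(V_{r,\alpha})_j(Y_r)_{il}$;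 $\{(V_{s,\alpha})_j,(V_{r,\beta})_l\}=-\tfrac12o(s,r)(V_{s,\alpha})_j(V_{r,\beta})_l-\tfrac12\delta_{sr}o(\alpha,\beta)\big((V_{r,\beta})_j(V_{s,\alpha})_l+(V_{s,\alpha})_j(V_{r,\beta})_l\big)$; $\{(W_{s,\alpha})_i,(W_{r,\beta})_k\}=-\tfrac12o(s,r)(W_{r,\beta})_k(W_{s,\alpha})_i-\tfrac12\delta_{sr}o(\alpha,\beta)\big((W_{r,\beta})_k(W_{s,\alpha})_i+(W_{s,\alpha})_k(W_{r,\beta})_i\big)$; $\{(V_{s,\alpha})_j,(W_{r,\beta})_k\}=\tfrac12o(s,r)(W_{r,\beta})_k(V_{s,\alpha})_j+\delta_{sr}\delta_{\alpha\beta}\big(\delta_{kj}+\tfrac12(W_{r,\beta})_k(V_{s,\alpha})_j+\tfrac12\delta_{kj}V_{s,\alpha}W_{r,\beta}\big)+\tfrac12\delta_{sr}o(\alpha,\beta)\big(\delta_{kj}V_{s,\alpha}W_{r,\beta}+(W_{r,\beta})_k(V_{s,\alpha})_j\big)$. *)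

theory Defs
  imports "HOL-Analysis.Analysis" "Jordan_Normal_Form.Matrix"
begin

text \<open>CX r i j = (X_r)_ij, CY r i j = (Y_r)_ij, CV s a j = (V_{s,a})_j, CW s a k = (W_{s,a})_k.
  Matrix indices are 0-based (0..n-1); spin labels a range over 1..d s;
  the cyclic index r ranges over 0..m-1.\<close>
datatype coord = CX nat nat nat | CY nat nat nat | CV nat nat nat | CW nat nat nat

type_synonym point = "coord \<Rightarrow> complex"

definition coords :: "nat \<Rightarrow> nat \<Rightarrow> (nat \<Rightarrow> nat) \<Rightarrow> coord set" where
  "coords m n d =
     {CX r i j | r i j. r < m \<and> i < n \<and> j < n} \<union>
     {CY r i j | r i j. r < m \<and> i < n \<and> j < n} \<union>
     {CV s a j | s a j. s < m \<and> 1 \<le> a \<and> a \<le> d s \<and> j < n} \<union>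
     {CW s a j | s a j. s < m \<and> 1 \<le> a \<and> a \<le> d s \<and> j < n}"

definition cs :: "nat \<Rightarrow> nat \<Rightarrow> nat" where "cs m r = (r + 1) mod m"
definition cp :: "nat \<Rightarrow> nat \<Rightarrow> nat" where "cp m r = (r + m - 1) mod m"

definition kd :: "nat \<Rightarrow> nat \<Rightarrow> complex" where "kd a b = (if a = b then 1 else 0)"

definition osg :: "nat \<Rightarrow> nat \<Rightarrow> complex" where "osg a b = of_int (sgn (int b - int a))"

definition Xm :: "nat \<Rightarrow> point \<Rightarrow> nat \<Rightarrow> complex mat" where
  "Xm n p r = mat n n (\<lambda>(i,j). p (CX r i j))"
definition Ym :: "nat \<Rightarrow> point \<Rightarrow> nat \<Rightarrow> complex mat" where
  "Ym n p r = mat n n (\<lambda>(i,j). p (CY r i j))"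
definition Vm :: "nat \<Rightarrow> point \<Rightarrow> nat \<Rightarrow> nat \<Rightarrow> complex mat" where
  "Vm n p s a = mat 1 n (\<lambda>(_,j). p (CV s a j))"
definition Wm :: "nat \<Rightarrow> point \<Rightarrow> nat \<Rightarrow> nat \<Rightarrow> complex mat" where
  "Wm n p s a = mat n 1 (\<lambda>(i,_). p (CW s a i))"

definition Mbullet :: "nat \<Rightarrow> nat \<Rightarrow> (nat \<Rightarrow> nat) \<Rightarrow> point set" where
  "Mbullet m n d = {p. \<forall>s<m.
      invertible_mat (1\<^sub>m n + Xm n p s * Ym n p s) \<and>
      invertible_mat (1\<^sub>m n + Ym n p s * Xm n p s) \<and>
      (\<forall>a. 1 \<le> a \<and> a \<le> d s \<longrightarrow>
         invertible_mat (1\<^sub>m n + Wm n p s a * Vm n p s a) \<and>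
         1 + (Vm n p s a * Wm n p s a) $$ (0,0) \<noteq> 0)}"

text \<open>The nm x nm cyclic block matrices X (blocks X_s at (s,s+1)) and Y (blocks Y_s at (s+1,s)).\<close>
definition bigX :: "nat \<Rightarrow> nat \<Rightarrow> point \<Rightarrow> complex mat" where
  "bigX m n p = mat (n*m) (n*m) (\<lambda>(a,b).
     if b div n = cs m (a div n) then p (CX (a div n) (a mod n) (b mod n)) else 0)"
definition bigY :: "nat \<Rightarrow> nat \<Rightarrow> point \<Rightarrow> complex mat" where
  "bigY m n p = mat (n*m) (n*m) (\<lambda>(a,b).
     if a div n = cs m (b div n) then p (CY (b div n) (a mod n) (b mod n)) else 0)"

definition mtrace :: "complex mat \<Rightarrow> complex" where
  "mtrace A = (\<Sum>i<dim_row A. A $$ (i,i))"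

definition mexp :: "complex mat \<Rightarrow> complex mat" where
  "mexp A = mat (dim_row A) (dim_col A) (\<lambda>(a,b). \<Sum>j. (A ^\<^sub>m j) $$ (a,b) / of_nat (fact j))"

text \<open>The power series Y^{-1}[exp(-tY^k) - 1] = sum_{j>=1} (-t)^j/j! Y^{kj-1}.\<close>
definition expm1_over :: "nat \<Rightarrow> real \<Rightarrow> complex mat \<Rightarrow> complex mat" where
  "expm1_over k t Y = mat (dim_row Y) (dim_col Y) (\<lambda>(a,b).
     \<Sum>j. (of_real (- t)) ^ (Suc j) / of_nat (fact (Suc j)) * (Y ^\<^sub>m (k * Suc j - 1)) $$ (a,b))"

text \<open>The quasi-Poisson bracket of two entry functions, evaluated at a point p
  (the listed formulas, extended by antisymmetry).\<close>
fun qpb0 :: "nat \<Rightarrow> nat \<Rightarrow> point \<Rightarrow> coord \<Rightarrow> coord \<Rightarrow> complex option" where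
  "qpb0 m n p (CX r i j) (CX s k l) = Some (
     1/2 * kd s (cp m r) * (\<Sum>q<n. p (CX (cp m r) k q) * p (CX r q j)) * kd i l
     - 1/2 * kd s (cs m r) * kd k j * (\<Sum>q<n. p (CX r i q) * p (CX (cs m r) q l)))"
| "qpb0 m n p (CY r i j) (CY s k l) = Some (
     1/2 * kd s (cp m r) * kd k j * (\<Sum>q<n. p (CY r i q) * p (CY (cp m r) q l))
     - 1/2 * kd s (cs m r) * (\<Sum>q<n. p (CY (cs m r) k q) * p (CY r q j)) * kd i l)"
| "qpb0 m n p (CX r i j) (CY s k l) = Some (
     kd s r * (kd k j * kd i l + 1/2 * (\<Sum>q<n. p (CY r k q) * p (CX r q j)) * kd i l
               + 1/2 * kd k j * (\<Sum>q<n. p (CX r i q) * p (CY r q l)))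
     - 1/2 * kd s (cp m r) * p (CX r k j) * p (CY (cp m r) i l)
     + 1/2 * kd s (cs m r) * p (CY (cs m r) k j) * p (CX r i l))"
| "qpb0 m n p (CX r i j) (CW s a k) = Some (
     1/2 * kd s (cs m r) * kd k j * (\<Sum>q<n. p (CX r i q) * p (CW (cs m r) a q))
     - 1/2 * kd r s * p (CX r k j) * p (CW r a i))"
| "qpb0 m n p (CX r i j) (CV s a l) = Some (
     1/2 * kd r s * (\<Sum>q<n. p (CV r a q) * p (CX r q j)) * kd i l
     - 1/2 * kd s (cs m r) * p (CV (cs m r) a j) * p (CX r i l))"
| "qpb0 m n p (CY r i j) (CW s a k) = Some (
     1/2 * kd r s * kd k j * (\<Sum>q<n. p (CY r i q) * p (CW r a q))
     - 1/2 * kd s (cs m r) * p (CY r k j) * p (CW (cs m r) a i))"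
| "qpb0 m n p (CY r i j) (CV s a l) = Some (
     1/2 * kd s (cs m r) * (\<Sum>q<n. p (CV (cs m r) a q) * p (CY r q j)) * kd i l
     - 1/2 * kd r s * p (CV r a j) * p (CY r i l))"
| "qpb0 m n p (CV s a j) (CV r b l) = Some (
     - 1/2 * osg s r * p (CV s a j) * p (CV r b l)
     - 1/2 * kd s r * osg a b * (p (CV r b j) * p (CV s a l) + p (CV s a j) * p (CV r b l)))"
| "qpb0 m n p (CW s a i) (CW r b k) = Some (
     - 1/2 * osg s r * p (CW r b k) * p (CW s a i)
     - 1/2 * kd s r * osg a b * (p (CW r b k) * p (CW s a i) + p (CW s a k) * p (CW r b i)))"
| "qpb0 m n p (CV s a j) (CW r b k) = Some (
     1/2 * osg s r * p (CW r b k) * p (CV s a j)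
     + kd s r * kd a b * (kd k j + 1/2 * p (CW r b k) * p (CV s a j)
                          + 1/2 * kd k j * (\<Sum>q<n. p (CV s a q) * p (CW r b q)))
     + 1/2 * kd s r * osg a b * (kd k j * (\<Sum>q<n. p (CV s a q) * p (CW r b q))
                                 + p (CW r b k) * p (CV s a j)))"
| "qpb0 m n p _ _ = None"

definition qpb :: "nat \<Rightarrow> nat \<Rightarrow> point \<Rightarrow> coord \<Rightarrow> coord \<Rightarrow> complex" where
  "qpb m n p g f = (case qpb0 m n p g f of Some v \<Rightarrow> v
                     | None \<Rightarrow> (case qpb0 m n p f g of Some v \<Rightarrow> - v | None \<Rightarrow> 0))"

definition pdiff :: "(point \<Rightarrow> complex) \<Rightarrow> point \<Rightarrow> coord \<Rightarrow> complex" where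
  "pdiff F p g = deriv (\<lambda>z. F (p(g := z))) (p g)"

text \<open>Hamiltonian vector field f \<mapsto> {F,f} on an entry function f, via the biderivation rule
  {F,f} = sum_g (dF/dg) {g,f}.\<close>
definition hamvf :: "nat \<Rightarrow> nat \<Rightarrow> (nat \<Rightarrow> nat) \<Rightarrow> (point \<Rightarrow> complex) \<Rightarrow> point \<Rightarrow> coord \<Rightarrow> complex" where
  "hamvf m n d F p f = (\<Sum>g\<in>coords m n d. pdiff F p g * qpb m n p g f)"

definition trYk :: "nat \<Rightarrow> nat \<Rightarrow> nat \<Rightarrow> point \<Rightarrow> complex" where
  "trYk m n k p = mtrace (bigY m n p ^\<^sub>m k) / of_nat k"

end

theory Submission
  imports Defs
begin

text \<open>The Hamiltonian \<open>tr(Y^k)/k\<close> depends only on the \<open>Y\<close>-coordinates, and its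
  partial derivative in \<open>(Y\<^sub>r)\<^sub>i\<^sub>j\<close> is an entry of \<open>Y^(k-1)\<close>. Feeding this into the bracket
  formulas, the Kronecker deltas collapse the sums and block-sparsity of the cyclic matrix \<open>Y\<close>
  turns what is left into block entries of \<open>Y^(k-1)\<close>, \<open>Y^k\<close> and \<open>X Y^k\<close>. The brackets with
  \<open>Y\<close>, \<open>V\<close>, \<open>W\<close> cancel because \<open>Y^k\<close> commutes with \<open>Y\<close>, and the bracket with \<open>X\<close> gives
  \<open>-Y^(k-1) - X Y^k\<close>. As \<open>m\<close> divides \<open>k\<close>, \<open>Y^k\<close> is block diagonal, which is what makes
  this matrix equation decouple into the coordinate equations.

  Along the flow \<open>Y\<close>, \<open>V\<close>, \<open>W\<close> are constant, so \<open>X\<close> solves the linear equation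
  \<open>X' = -Y^(k-1) - X Y^k\<close>, whose unique solution (integrating factor \<open>exp(t Y^k)\<close>) is the
  stated formula. Finally \<open>1 + X(t) Y = (1 + X(0) Y) exp(-t Y^k)\<close> and similarly for \<open>1 + Y X(t)\<close>;
  the exponential is block diagonal and invertible, so the invertibility conditions
  defining \<open>M\<^sup>\<bullet>\<close> are preserved.\<close>

section \<open>Square matrices\<close>

lemma index_mult_mat_sum:
  assumes "A \<in> carrier_mat nr nk" "B \<in> carrier_mat nk nc" "i < nr" "j < nc"
  shows "(A * B) $$ (i, j) = (\<Sum>c<nk. A $$ (i, c) * B $$ (c, j))"
  using assms by (auto simp: scalar_prod_def atLeast0LessThan intro!: sum.cong)

lemma pow_mat_add:
  assumes "A \<in> carrier_mat N N"
  shows "A ^\<^sub>m a * A ^\<^sub>m b = A ^\<^sub>m (a + b)"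
proof (induction b)
  case 0 then show ?case using assms by simp
next
  case (Suc b)
  have "A ^\<^sub>m a * A ^\<^sub>m Suc b = (A ^\<^sub>m a * A ^\<^sub>m b) * A"
    using assms by (simp del: assoc_mult_mat add: assoc_mult_mat[symmetric, of _ N N _ N _ N])
  then show ?case using Suc by simp
qed

lemma pow_mat_mult:
  assumes "A \<in> carrier_mat N N"
  shows "(A ^\<^sub>m a) ^\<^sub>m b = A ^\<^sub>m (a * b)"
proof (induction b)
  case 0 then show ?case using assms by simp
next
  case (Suc b)
  have "(A ^\<^sub>m a) ^\<^sub>m Suc b = A ^\<^sub>m (a * b) * A ^\<^sub>m a" using Suc by simp
  also have "\<dots> = A ^\<^sub>m (a * b + a)" by (rule pow_mat_add[OF assms])
  finally show ?case by (simp add: add.commute)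
qed

lemma pow_mat_Suc_left:
  assumes "A \<in> carrier_mat N N"
  shows "A ^\<^sub>m Suc j = A * A ^\<^sub>m j"
  using pow_mat_add[OF assms, of 1 j] assms by simp

lemma pow_mat_entry_add:
  assumes "A \<in> carrier_mat N N" "a < N" "b < N"
  shows "(\<Sum>l<N. (A ^\<^sub>m p) $$ (a, l) * (A ^\<^sub>m q) $$ (l, b)) = (A ^\<^sub>m (p + q)) $$ (a, b)"
  using index_mult_mat_sum[of "A ^\<^sub>m p" N N "A ^\<^sub>m q" N a b] pow_mat_add[OF assms(1), of p q] assms
  by simp

lemma commute_pow_mat:
  assumes B: "B \<in> carrier_mat N N" and C: "C \<in> carrier_mat N N" and BC: "C * B = B * C"
  shows "C * B ^\<^sub>m j = B ^\<^sub>m j * C"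
proof (induction j)
  case 0 then show ?case using B C by simp
next
  case (Suc j)
  have "C * B ^\<^sub>m Suc j = (C * B ^\<^sub>m j) * B" using B C by (simp add: assoc_mult_mat[of C N N _ N B N])
  also have "\<dots> = B ^\<^sub>m j * (C * B)" unfolding Suc using B C by (simp add: assoc_mult_mat[of _ N N C N B N])
  also have "\<dots> = B ^\<^sub>m j * (B * C)" unfolding BC ..
  also have "\<dots> = B ^\<^sub>m Suc j * C" using B C by (simp add: assoc_mult_mat[of _ N N B N C N])
  finally show ?case .
qed

lemma pow_mat_commute:
  assumes "A \<in> carrier_mat N N"
  shows "A * A ^\<^sub>m j = A ^\<^sub>m j * A"
  by (rule commute_pow_mat[OF assms assms refl])

lemma smult_smult_mat: "a \<cdot>\<^sub>m (b \<cdot>\<^sub>m M) = (a * b :: 'a :: semigroup_mult) \<cdot>\<^sub>m M"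
  by (rule eq_matI) (auto simp: mult.assoc)

lemma smult_pow_mat:
  fixes A :: "'a::comm_ring_1 mat"
  assumes "A \<in> carrier_mat N N"
  shows "(z \<cdot>\<^sub>m A) ^\<^sub>m j = (z ^ j) \<cdot>\<^sub>m (A ^\<^sub>m j)"
proof (induction j)
  case 0 then show ?case using assms by (auto intro!: eq_matI)
next
  case (Suc j)
  have c: "A ^\<^sub>m j \<in> carrier_mat N N" using assms by simp
  show ?case unfolding pow_mat.simps Suc
    using mult_smult_assoc_mat[OF c smult_carrier_mat[OF assms], of "z^j" z]
      mult_smult_distrib[OF c assms, of z]
    by (simp add: smult_smult_mat mult.commute)
qed

lemma mtrace_mult_commute:
  assumes X: "X \<in> carrier_mat N N" and Y: "Y \<in> carrier_mat N N"
  shows "mtrace (X * Y) = mtrace (Y * X)"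
proof -
  have "mtrace (X * Y) = (\<Sum>a<N. (X * Y) $$ (a, a))" unfolding mtrace_def using X by simp
  also have "\<dots> = (\<Sum>a<N. \<Sum>c<N. X $$ (a, c) * Y $$ (c, a))"
    by (intro sum.cong refl) (rule index_mult_mat_sum, use X Y in auto)
  also have "\<dots> = (\<Sum>c<N. \<Sum>a<N. Y $$ (c, a) * X $$ (a, c))"
    by (subst sum.swap) (simp add: mult.commute)
  also have "\<dots> = (\<Sum>c<N. (Y * X) $$ (c, c))"
    by (intro sum.cong refl) (rule index_mult_mat_sum[symmetric], use X Y in auto)
  also have "\<dots> = mtrace (Y * X)" unfolding mtrace_def using Y by simp
  finally show ?thesis .
qed

lemma invertible_matI:
  assumes "A \<in> carrier_mat n n" "B \<in> carrier_mat n n" "A * B = 1\<^sub>m n" "B * A = 1\<^sub>m n"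
  shows "invertible_mat A"
  unfolding invertible_mat_def inverts_mat_def using assms by auto

lemma invertible_matE:
  fixes A :: "'a :: semiring_1 mat"
  assumes A: "A \<in> carrier_mat n n" and "invertible_mat A"
  obtains B where "B \<in> carrier_mat n n" "A * B = 1\<^sub>m n" "B * A = 1\<^sub>m n"
proof -
  obtain B where 1: "A * B = 1\<^sub>m (dim_row A)" and 2: "B * A = 1\<^sub>m (dim_row B)"
    using assms(2) unfolding invertible_mat_def inverts_mat_def by blast
  have "dim_col B = n" using arg_cong[OF 1, of dim_col] A by simp
  moreover have "dim_row B = n" using arg_cong[OF 2, of dim_col] A by simp
  ultimately show ?thesis using that 1 2 A by auto
qed

lemma invertible_mat_mult:
  fixes A B :: "'a :: semiring_1 mat"
  assumes A: "A \<in> carrier_mat n n" and B: "B \<in> carrier_mat n n"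
    and "invertible_mat A" "invertible_mat B"
  shows "invertible_mat (A * B)"
proof -
  obtain A' where A': "A' \<in> carrier_mat n n" "A * A' = 1\<^sub>m n" "A' * A = 1\<^sub>m n"
    using invertible_matE[OF A assms(3)] by blast
  obtain B' where B': "B' \<in> carrier_mat n n" "B * B' = 1\<^sub>m n" "B' * B = 1\<^sub>m n"
    using invertible_matE[OF B assms(4)] by blast
  have "(A * B) * (B' * A') = A * (B * B') * A'"
    using A B A'(1) B'(1) by (simp add: assoc_mult_mat[of _ n n _ n _ n])
  then have 1: "(A * B) * (B' * A') = 1\<^sub>m n" using A A' B'(2) by simp
  have "(B' * A') * (A * B) = B' * (A' * A) * B"
    using A B A'(1) B'(1) by (simp add: assoc_mult_mat[of _ n n _ n _ n])
  then have 2: "(B' * A') * (A * B) = 1\<^sub>m n" using B B' A'(3) by simp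
  show ?thesis by (rule invertible_matI[OF _ _ 1 2]) (use A B A' B' in auto)
qed

lemma sum_suminf_mult_right:
  fixes c :: "nat \<Rightarrow> nat \<Rightarrow> complex"
  assumes "\<And>l. l < N \<Longrightarrow> summable (c l)"
  shows "(\<Sum>l<N. suminf (c l) * x l) = (\<Sum>i. \<Sum>l<N. c l i * x l)"
  by (subst suminf_sum) (auto intro!: sum.cong suminf_mult2 summable_mult2 assms)

lemma sum_suminf_mult_left:
  fixes c :: "nat \<Rightarrow> nat \<Rightarrow> complex"
  assumes "\<And>l. l < N \<Longrightarrow> summable (c l)"
  shows "(\<Sum>l<N. x l * suminf (c l)) = (\<Sum>i. \<Sum>l<N. x l * c l i)"
  using sum_suminf_mult_right[of N c x, OF assms] by (simp add: mult.commute)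

section \<open>The matrix exponential\<close>

definition mat_bound :: "nat \<Rightarrow> complex mat \<Rightarrow> real" where
  "mat_bound N B = 1 + (\<Sum>a<N. \<Sum>b<N. norm (B $$ (a, b)))"

lemma mat_bound_ge_1: "mat_bound N B \<ge> 1"
  unfolding mat_bound_def by (simp add: sum_nonneg)

lemma norm_pow_mat_entry_le:
  assumes B: "B \<in> carrier_mat N N" and "a < N" "b < N"
  shows "norm ((B ^\<^sub>m j) $$ (a, b)) \<le> mat_bound N B ^ j"
  using assms(2,3)
proof (induction j arbitrary: b)
  case 0 then show ?case using B by simp
next
  case (Suc j)
  have col: "(\<Sum>c<N. norm (B $$ (c, b))) \<le> mat_bound N B"
  proof -
    have "(\<Sum>c<N. norm (B $$ (c, b))) \<le> (\<Sum>c<N. \<Sum>b'<N. norm (B $$ (c, b')))"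
      by (intro sum_mono member_le_sum) (use Suc.prems in auto)
    then show ?thesis unfolding mat_bound_def by simp
  qed
  have "(B ^\<^sub>m Suc j) $$ (a, b) = (\<Sum>c<N. (B ^\<^sub>m j) $$ (a, c) * B $$ (c, b))"
    using B Suc.prems by (simp add: index_mult_mat_sum[of _ N N _ N] del: index_mult_mat)
  also have "norm \<dots> \<le> (\<Sum>c<N. norm ((B ^\<^sub>m j) $$ (a, c)) * norm (B $$ (c, b)))"
    by (rule order_trans[OF norm_sum]) (simp add: norm_mult)
  also have "\<dots> \<le> (\<Sum>c<N. mat_bound N B ^ j * norm (B $$ (c, b)))"
    by (intro sum_mono mult_right_mono) (use Suc in auto)
  also have "\<dots> = mat_bound N B ^ j * (\<Sum>c<N. norm (B $$ (c, b)))"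
    by (simp add: sum_distrib_left)
  also have "\<dots> \<le> mat_bound N B ^ j * mat_bound N B"
    by (intro mult_left_mono col) (use mat_bound_ge_1[of N B] in auto)
  finally show ?case by (simp add: mult.commute)
qed

lemma summable_powser_fact_bounded:
  fixes c :: "nat \<Rightarrow> complex"
  assumes "\<And>j. norm (c j) \<le> C * R ^ j / fact j"
  shows "summable (\<lambda>j. c j * z ^ j)"
proof (rule summable_comparison_test)
  show "\<exists>N. \<forall>j\<ge>N. norm (c j * z ^ j) \<le> C * (inverse (fact j) * (R * norm z) ^ j)"
  proof (intro exI allI impI)
    fix j :: nat
    have "norm (c j * z ^ j) = norm (c j) * norm z ^ j" by (simp add: norm_mult norm_power)
    also have "\<dots> \<le> C * R ^ j / fact j * norm z ^ j"
      by (intro mult_right_mono assms) auto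
    also have "\<dots> = C * (inverse (fact j) * (R * norm z) ^ j)"
      by (simp add: power_mult_distrib divide_inverse)
    finally show "norm (c j * z ^ j) \<le> C * (inverse (fact j) * (R * norm z) ^ j)" .
  qed
  show "summable (\<lambda>j. C * (inverse (fact j) * (R * norm z) ^ j))"
    by (intro summable_mult summable_exp)
qed

lemma powser_fact_bounded_has_field_derivative:
  fixes c :: "nat \<Rightarrow> complex"
  assumes "\<And>j. norm (c j) \<le> C * R ^ j / fact j"
  shows "((\<lambda>z. \<Sum>j. c j * z ^ j) has_field_derivative (\<Sum>j. diffs c j * z ^ j)) (at z)"
  by (rule termdiffs_strong_converges_everywhere) (rule summable_powser_fact_bounded[OF assms])

definition exp_coeff :: "complex mat \<Rightarrow> nat \<Rightarrow> nat \<Rightarrow> nat \<Rightarrow> complex" where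
  "exp_coeff B a b j = (B ^\<^sub>m j) $$ (a, b) / fact j"

lemma exp_coeff_bound:
  assumes "B \<in> carrier_mat N N" "a < N" "b < N"
  shows "norm (exp_coeff B a b j) \<le> 1 * mat_bound N B ^ j / fact j"
  using norm_pow_mat_entry_le[OF assms, of j] unfolding exp_coeff_def
  by (simp add: norm_divide divide_right_mono)

lemma summable_exp_coeff:
  assumes "B \<in> carrier_mat N N" "a < N" "b < N"
  shows "summable (\<lambda>j. exp_coeff B a b j * z ^ j)"
  by (rule summable_powser_fact_bounded[OF exp_coeff_bound[OF assms]])

lemma mexp_dim[simp]: "dim_row (mexp M) = dim_row M" "dim_col (mexp M) = dim_col M"
  unfolding mexp_def by simp_all

lemma mexp_carrier_mat[simp]: "B \<in> carrier_mat N N \<Longrightarrow> mexp (z \<cdot>\<^sub>m B) \<in> carrier_mat N N"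
  unfolding mexp_def by simp

lemma mexp_entry:
  assumes "B \<in> carrier_mat N N" "a < N" "b < N"
  shows "mexp (z \<cdot>\<^sub>m B) $$ (a, b) = (\<Sum>j. exp_coeff B a b j * z ^ j)"
  using assms unfolding mexp_def exp_coeff_def
  by (simp add: smult_pow_mat[OF assms(1)] mult.commute)

lemma mult_mexp_entry:
  assumes B: "B \<in> carrier_mat N N" and ab: "a < N" "b < N"
  shows "(B * mexp (z \<cdot>\<^sub>m B)) $$ (a, b) = (\<Sum>j. (B ^\<^sub>m Suc j) $$ (a, b) / fact j * z ^ j)"
proof -
  have "(B * mexp (z \<cdot>\<^sub>m B)) $$ (a, b) = (\<Sum>l<N. B $$ (a, l) * (\<Sum>j. exp_coeff B l b j * z ^ j))"
    using assms by (auto simp: index_mult_mat_sum[of _ N N _ N] mexp_entry intro!: sum.cong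
        simp del: index_mult_mat)
  also have "\<dots> = (\<Sum>j. \<Sum>l<N. B $$ (a, l) * (exp_coeff B l b j * z ^ j))"
    by (rule sum_suminf_mult_left) (rule summable_exp_coeff[OF B _ ab(2)], simp)
  also have "\<dots> = (\<Sum>j. (B ^\<^sub>m Suc j) $$ (a, b) / fact j * z ^ j)"
  proof (rule suminf_cong)
    fix j
    have e: "(B ^\<^sub>m Suc j) $$ (a, b) = (\<Sum>l<N. B $$ (a, l) * (B ^\<^sub>m j) $$ (l, b))"
      unfolding pow_mat_Suc_left[OF B] by (rule index_mult_mat_sum) (use assms in auto)
    show "(\<Sum>l<N. B $$ (a, l) * (exp_coeff B l b j * z ^ j)) = (B ^\<^sub>m Suc j) $$ (a, b) / fact j * z ^ j"
      unfolding e exp_coeff_def sum_divide_distrib sum_distrib_right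
      by (intro sum.cong refl) (simp add: field_simps)
  qed
  finally show ?thesis .
qed

lemma commute_mexp:
  assumes B: "B \<in> carrier_mat N N" and C: "C \<in> carrier_mat N N" and BC: "C * B = B * C"
  shows "C * mexp (z \<cdot>\<^sub>m B) = mexp (z \<cdot>\<^sub>m B) * C"
proof (rule eq_matI)
  fix a b assume "a < dim_row (mexp (z \<cdot>\<^sub>m B) * C)" "b < dim_col (mexp (z \<cdot>\<^sub>m B) * C)"
  then have ab: "a < N" "b < N" using B C by auto
  have "(C * mexp (z \<cdot>\<^sub>m B)) $$ (a, b) = (\<Sum>l<N. C $$ (a, l) * (\<Sum>j. exp_coeff B l b j * z ^ j))"
    using B C ab by (auto simp: index_mult_mat_sum[of _ N N _ N] mexp_entry intro!: sum.cong
        simp del: index_mult_mat)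
  also have "\<dots> = (\<Sum>j. \<Sum>l<N. C $$ (a, l) * (exp_coeff B l b j * z ^ j))"
    by (rule sum_suminf_mult_left) (rule summable_exp_coeff[OF B _ ab(2)], simp)
  also have "\<dots> = (\<Sum>j. (C * B ^\<^sub>m j) $$ (a, b) / fact j * z ^ j)"
  proof (rule suminf_cong)
    fix j
    have e: "(C * B ^\<^sub>m j) $$ (a, b) = (\<Sum>l<N. C $$ (a, l) * (B ^\<^sub>m j) $$ (l, b))"
      by (rule index_mult_mat_sum) (use B C ab in auto)
    show "(\<Sum>l<N. C $$ (a, l) * (exp_coeff B l b j * z ^ j)) = (C * B ^\<^sub>m j) $$ (a, b) / fact j * z ^ j"
      unfolding e exp_coeff_def sum_divide_distrib sum_distrib_right
      by (intro sum.cong refl) (simp add: field_simps)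
  qed
  also have "\<dots> = (\<Sum>j. (B ^\<^sub>m j * C) $$ (a, b) / fact j * z ^ j)"
    using commute_pow_mat[OF B C BC] by simp
  also have "\<dots> = (\<Sum>j. \<Sum>l<N. (exp_coeff B a l j * z ^ j) * C $$ (l, b))"
  proof (rule suminf_cong)
    fix j
    have e: "(B ^\<^sub>m j * C) $$ (a, b) = (\<Sum>l<N. (B ^\<^sub>m j) $$ (a, l) * C $$ (l, b))"
      by (rule index_mult_mat_sum) (use B C ab in auto)
    show "(B ^\<^sub>m j * C) $$ (a, b) / fact j * z ^ j = (\<Sum>l<N. (exp_coeff B a l j * z ^ j) * C $$ (l, b))"
      unfolding e exp_coeff_def sum_divide_distrib sum_distrib_right
      by (intro sum.cong refl) (simp add: field_simps)
  qed
  also have "\<dots> = (\<Sum>l<N. (\<Sum>j. exp_coeff B a l j * z ^ j) * C $$ (l, b))"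
    by (rule sum_suminf_mult_right[symmetric]) (rule summable_exp_coeff[OF B ab(1)], simp)
  also have "\<dots> = (mexp (z \<cdot>\<^sub>m B) * C) $$ (a, b)"
    using B C ab by (auto simp: index_mult_mat_sum[of _ N N _ N] mexp_entry intro!: sum.cong
        simp del: index_mult_mat)
  finally show "(C * mexp (z \<cdot>\<^sub>m B)) $$ (a, b) = (mexp (z \<cdot>\<^sub>m B) * C) $$ (a, b)" .
qed (use B C in auto)

lemma mexp_commute:
  assumes "B \<in> carrier_mat N N"
  shows "mexp (z \<cdot>\<^sub>m B) * B = B * mexp (z \<cdot>\<^sub>m B)"
  using commute_mexp[OF assms assms refl] by simp

lemma mexp_has_field_derivative:
  assumes B: "B \<in> carrier_mat N N" and ab: "a < N" "b < N"
  shows "((\<lambda>z. mexp (z \<cdot>\<^sub>m B) $$ (a, b)) has_field_derivative (B * mexp (z \<cdot>\<^sub>m B)) $$ (a, b)) (at z)"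
proof -
  have "(\<Sum>j. diffs (exp_coeff B a b) j * z ^ j) = (B * mexp (z \<cdot>\<^sub>m B)) $$ (a, b)"
    unfolding mult_mexp_entry[OF assms] diffs_def exp_coeff_def
  proof (intro suminf_cong)
    fix j
    have "of_nat (Suc j) * ((B ^\<^sub>m Suc j) $$ (a, b) / fact (Suc j)) = (B ^\<^sub>m Suc j) $$ (a, b) / (fact j :: complex)"
      by (simp add: fact_Suc del: of_nat_Suc pow_mat.simps)
    then show "of_nat (Suc j) * ((B ^\<^sub>m Suc j) $$ (a, b) / fact (Suc j)) * z ^ j = (B ^\<^sub>m Suc j) $$ (a, b) / fact j * z ^ j"
      by simp
  qed
  moreover have "((\<lambda>z. \<Sum>j. exp_coeff B a b j * z ^ j) has_field_derivative
      (\<Sum>j. diffs (exp_coeff B a b) j * z ^ j)) (at z)"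
    by (rule powser_fact_bounded_has_field_derivative[OF exp_coeff_bound[OF assms]])
  ultimately show ?thesis using mexp_entry[OF assms] by simp
qed

lemma mexp_has_vector_derivative:
  assumes B: "B \<in> carrier_mat N N" and ab: "a < N" "b < N"
  shows "((\<lambda>s. mexp ((of_real s * w) \<cdot>\<^sub>m B) $$ (a, b)) has_vector_derivative
           w * (B * mexp ((of_real t * w) \<cdot>\<^sub>m B)) $$ (a, b)) (at t)"
proof -
  have "((\<lambda>z. mexp ((z * w) \<cdot>\<^sub>m B) $$ (a, b)) has_field_derivative
          (B * mexp ((of_real t * w) \<cdot>\<^sub>m B)) $$ (a, b) * w) (at (of_real t))"
    by (rule DERIV_chain2[OF mexp_has_field_derivative[OF assms]]) (auto intro!: derivative_eq_intros)
  from has_vector_derivative_real_field[OF this, of UNIV] show ?thesis by (simp add: mult.commute)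
qed

lemma mexp_has_vector_derivative_pos:
  assumes "B \<in> carrier_mat N N" "a < N" "b < N"
  shows "((\<lambda>s. mexp (of_real s \<cdot>\<^sub>m B) $$ (a, b)) has_vector_derivative
           (B * mexp (of_real t \<cdot>\<^sub>m B)) $$ (a, b)) (at t)"
  using mexp_has_vector_derivative[OF assms, of 1 t] by simp

lemma mexp_has_vector_derivative_neg:
  assumes "B \<in> carrier_mat N N" "a < N" "b < N"
  shows "((\<lambda>s. mexp ((- of_real s) \<cdot>\<^sub>m B) $$ (a, b)) has_vector_derivative
           (- (B * mexp ((- of_real t) \<cdot>\<^sub>m B))) $$ (a, b)) (at t)"
  using mexp_has_vector_derivative[OF assms, of "-1" t] assms by (simp add: carrier_matD)

lemma mexp_zero:
  assumes B: "B \<in> carrier_mat N N"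
  shows "mexp (0 \<cdot>\<^sub>m B) = 1\<^sub>m N"
proof (rule eq_matI)
  fix a b assume ab: "a < dim_row (1\<^sub>m N)" "b < dim_col (1\<^sub>m N)"
  then have "mexp (0 \<cdot>\<^sub>m B) $$ (a, b) = (\<Sum>j. exp_coeff B a b j * 0 ^ j)"
    using mexp_entry[OF B] by simp
  also have "\<dots> = exp_coeff B a b 0" by (rule powser_zero)
  finally show "mexp (0 \<cdot>\<^sub>m B) $$ (a, b) = 1\<^sub>m N $$ (a, b)" using ab B by (simp add: exp_coeff_def)
qed (use B in auto)

section \<open>Linear matrix differential equations\<close>

lemma has_vector_derivative_zero_imp_const:
  fixes f :: "real \<Rightarrow> complex"
  assumes "\<And>t. (f has_vector_derivative 0) (at t)"
  shows "f t = f 0"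
proof -
  obtain c where "\<And>x. x \<in> UNIV \<Longrightarrow> f x = c"
    by (rule has_vector_derivative_zero_constant[of UNIV f]) (use assms in auto)
  then show ?thesis by simp
qed

lemma has_vector_derivative_mult_mat_entry:
  fixes F G :: "real \<Rightarrow> complex mat"
  assumes F: "\<And>s. F s \<in> carrier_mat N N" and G: "\<And>s. G s \<in> carrier_mat N N"
    and DF: "DF \<in> carrier_mat N N" and DG: "DG \<in> carrier_mat N N"
    and dF: "\<And>a b. a < N \<Longrightarrow> b < N \<Longrightarrow> ((\<lambda>s. F s $$ (a, b)) has_vector_derivative DF $$ (a, b)) (at t)"
    and dG: "\<And>a b. a < N \<Longrightarrow> b < N \<Longrightarrow> ((\<lambda>s. G s $$ (a, b)) has_vector_derivative DG $$ (a, b)) (at t)"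
    and ab: "a < N" "b < N"
  shows "((\<lambda>s. (F s * G s) $$ (a, b)) has_vector_derivative (DF * G t + F t * DG) $$ (a, b)) (at t)"
proof -
  have e: "(\<lambda>s. (F s * G s) $$ (a, b)) = (\<lambda>s. \<Sum>c<N. F s $$ (a, c) * G s $$ (c, b))"
    using F G ab by (simp add: index_mult_mat_sum[of _ N N _ N] del: index_mult_mat)
  have "((\<lambda>s. \<Sum>c<N. F s $$ (a, c) * G s $$ (c, b)) has_vector_derivative
          (\<Sum>c<N. F t $$ (a, c) * DG $$ (c, b) + DF $$ (a, c) * G t $$ (c, b))) (at t)"
    by (intro has_vector_derivative_sum has_vector_derivative_mult dF dG) (use ab in auto)
  moreover have "(\<Sum>c<N. F t $$ (a, c) * DG $$ (c, b) + DF $$ (a, c) * G t $$ (c, b))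
       = (DF * G t + F t * DG) $$ (a, b)"
  proof -
    have "(DF * G t + F t * DG) $$ (a, b) = (DF * G t) $$ (a, b) + (F t * DG) $$ (a, b)"
      by (rule index_add_mat) (use F[of t] G[of t] DF DG ab in auto)
    then show ?thesis using F G DF DG ab
      by (simp add: index_mult_mat_sum[of _ N N _ N] sum.distrib add.commute del: index_mult_mat)
  qed
  ultimately show ?thesis unfolding e by simp
qed

lemma mult_mat_const_if_derivatives_cancel:
  fixes F G :: "real \<Rightarrow> complex mat"
  assumes K: "K \<in> carrier_mat N N" and G: "\<And>s. G s \<in> carrier_mat N N" and F: "\<And>s. F s \<in> carrier_mat N N"
    and dG: "\<And>t a b. a < N \<Longrightarrow> b < N \<Longrightarrow> ((\<lambda>s. G s $$ (a, b)) has_vector_derivative (- (G t * K)) $$ (a, b)) (at t)"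
    and dF: "\<And>t a b. a < N \<Longrightarrow> b < N \<Longrightarrow> ((\<lambda>s. F s $$ (a, b)) has_vector_derivative (K * F t) $$ (a, b)) (at t)"
  shows "G t * F t = G 0 * F 0"
proof (rule eq_matI)
  fix a b assume "a < dim_row (G 0 * F 0)" "b < dim_col (G 0 * F 0)"
  then have ab: "a < N" "b < N" using F[of 0] G[of 0] by auto
  have "((\<lambda>s. (G s * F s) $$ (a, b)) has_vector_derivative 0) (at t')" for t'
  proof -
    have "G t' * (K * F t') = (G t' * K) * F t'"
      using F G K by (simp add: assoc_mult_mat[of _ N N _ N _ N])
    then have "(- (G t' * K)) * F t' + G t' * (K * F t') = 0\<^sub>m N N"
      using F[of t'] G[of t'] K by (simp add: carrier_matD)
    moreover have "((\<lambda>s. (G s * F s) $$ (a, b)) has_vector_derivative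
        ((- (G t' * K)) * F t' + G t' * (K * F t')) $$ (a, b)) (at t')"
      by (rule has_vector_derivative_mult_mat_entry[OF G F _ _ dG dF ab])
        (use K F G in \<open>auto intro!: mult_carrier_mat uminus_carrier_mat\<close>)
    ultimately show ?thesis using ab by simp
  qed
  then show "(G t * F t) $$ (a, b) = (G 0 * F 0) $$ (a, b)"
    by (rule has_vector_derivative_zero_imp_const)
qed (use F[of t] F[of 0] G[of t] G[of 0] in auto)

lemma mexp_uminus_mult_mexp:
  assumes K: "K \<in> carrier_mat N N"
  shows "mexp ((- of_real t) \<cdot>\<^sub>m K) * mexp (of_real t \<cdot>\<^sub>m K) = 1\<^sub>m N"
proof -
  have "mexp ((- of_real t) \<cdot>\<^sub>m K) * mexp (of_real t \<cdot>\<^sub>m K)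
      = mexp ((- of_real 0) \<cdot>\<^sub>m K) * mexp (of_real 0 \<cdot>\<^sub>m K)"
  proof (rule mult_mat_const_if_derivatives_cancel[OF K])
    fix t a b assume ab: "a < N" "b < N"
    show "((\<lambda>s. mexp (of_real s \<cdot>\<^sub>m K) $$ (a, b)) has_vector_derivative (K * mexp (of_real t \<cdot>\<^sub>m K)) $$ (a, b)) (at t)"
      by (rule mexp_has_vector_derivative_pos[OF K ab])
    show "((\<lambda>s. mexp ((- of_real s) \<cdot>\<^sub>m K) $$ (a, b)) has_vector_derivative
        (- (mexp ((- of_real t) \<cdot>\<^sub>m K) * K)) $$ (a, b)) (at t)"
      using mexp_has_vector_derivative_neg[OF K ab, of t] mexp_commute[OF K] by simp
  qed (use K in auto)
  then show ?thesis using mexp_zero[OF K] K by simp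
qed

lemma mexp_mult_mexp_uminus:
  assumes "K \<in> carrier_mat N N"
  shows "mexp (of_real t \<cdot>\<^sub>m K) * mexp ((- of_real t) \<cdot>\<^sub>m K) = 1\<^sub>m N"
  using mexp_uminus_mult_mexp[OF assms, of "-t"] by simp

text \<open>The difference \<open>Z\<close> of two solutions satisfies \<open>Z' = - Z K\<close>, so \<open>Z(s) exp(s K)\<close> is
  constant, and it vanishes at \<open>s = 0\<close>.\<close>
lemma linear_mat_ode_unique:
  fixes F G :: "real \<Rightarrow> complex mat"
  assumes K: "K \<in> carrier_mat N N" and C: "C \<in> carrier_mat N N"
    and F: "\<And>s. F s \<in> carrier_mat N N" and G: "\<And>s. G s \<in> carrier_mat N N"
    and init: "F 0 = G 0"
    and dF: "\<And>t a b. a < N \<Longrightarrow> b < N \<Longrightarrow>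
               ((\<lambda>s. F s $$ (a, b)) has_vector_derivative (C - F t * K) $$ (a, b)) (at t)"
    and dG: "\<And>t a b. a < N \<Longrightarrow> b < N \<Longrightarrow>
               ((\<lambda>s. G s $$ (a, b)) has_vector_derivative (C - G t * K) $$ (a, b)) (at t)"
  shows "F t = G t"
proof -
  define Z where "Z s = F s - G s" for s
  define E where "E s = mexp (of_real s \<cdot>\<^sub>m K)" for s :: real
  have Z: "Z s \<in> carrier_mat N N" for s unfolding Z_def using F G by (auto intro: minus_carrier_mat)
  have E: "E s \<in> carrier_mat N N" for s unfolding E_def using K by simp
  have dZ: "((\<lambda>s. Z s $$ (a, b)) has_vector_derivative (- (Z t * K)) $$ (a, b)) (at t)"
    if ab: "a < N" "b < N" for t a b
  proof -
    have "Z t * K = F t * K - G t * K"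
      unfolding Z_def by (rule minus_mult_distrib_mat[of _ N N]) (use F G K in auto)
    then have "(C - F t * K) $$ (a, b) - (C - G t * K) $$ (a, b) = (- (Z t * K)) $$ (a, b)"
      using ab F[of t] G[of t] K C by simp
    moreover have "(\<lambda>s. Z s $$ (a, b)) = (\<lambda>s. F s $$ (a, b) - G s $$ (a, b))"
      unfolding Z_def using ab F G by (intro ext index_minus_mat) (metis carrier_matD)+
    ultimately show ?thesis using has_vector_derivative_diff[OF dF[OF ab, of t] dG[OF ab, of t]] by simp
  qed
  have dE: "((\<lambda>s. E s $$ (a, b)) has_vector_derivative (K * E t) $$ (a, b)) (at t)"
    if "a < N" "b < N" for t a b
    unfolding E_def by (rule mexp_has_vector_derivative_pos[OF K that])
  have "Z t * E t = Z 0 * E 0"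
    by (rule mult_mat_const_if_derivatives_cancel[OF K Z E dZ dE])
  also have "\<dots> = 0\<^sub>m N N" unfolding Z_def init using G[of 0] E[of 0] by simp
  finally have "Z t * E t = 0\<^sub>m N N" .
  have "Z t = Z t * (E t * mexp ((- of_real t) \<cdot>\<^sub>m K))"
    unfolding E_def mexp_mult_mexp_uminus[OF K] using Z[of t] by simp
  also have "\<dots> = (Z t * E t) * mexp ((- of_real t) \<cdot>\<^sub>m K)"
    using Z E K by (simp add: assoc_mult_mat[of _ N N _ N _ N])
  finally have "Z t = 0\<^sub>m N N" using \<open>Z t * E t = 0\<^sub>m N N\<close> K by simp
  show ?thesis
  proof (rule eq_matI)
    fix a b assume "a < dim_row (G t)" "b < dim_col (G t)"
    then have "a < N" "b < N" using G[of t] by auto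
    then show "F t $$ (a, b) = G t $$ (a, b)"
      using arg_cong[OF \<open>Z t = 0\<^sub>m N N\<close>, of "\<lambda>M. M $$ (a, b)"] F[of t] G[of t]
      unfolding Z_def by simp
  qed (use F[of t] G[of t] in auto)
qed

section \<open>The series \<open>Y\<^sup>-\<^sup>1 (exp(-t Y\<^sup>k) - 1)\<close>\<close>

definition expm1_coeff :: "complex mat \<Rightarrow> nat \<Rightarrow> nat \<Rightarrow> nat \<Rightarrow> nat \<Rightarrow> complex" where
  "expm1_coeff Y k a b i = (if i = 0 then 0 else (Y ^\<^sub>m (k * i - 1)) $$ (a, b) / fact i)"

lemma expm1_coeff_bound:
  assumes Y: "Y \<in> carrier_mat N N" and ab: "a < N" "b < N"
  shows "norm (expm1_coeff Y k a b i) \<le> 1 * (mat_bound N Y ^ k) ^ i / fact i"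
proof (cases "i = 0")
  case True then show ?thesis by (simp add: expm1_coeff_def)
next
  case False
  have "norm ((Y ^\<^sub>m (k * i - 1)) $$ (a, b)) \<le> mat_bound N Y ^ (k * i - 1)"
    by (rule norm_pow_mat_entry_le[OF assms])
  also have "\<dots> \<le> mat_bound N Y ^ (k * i)" by (rule power_increasing) (use mat_bound_ge_1 in auto)
  also have "\<dots> = (mat_bound N Y ^ k) ^ i" by (simp add: power_mult)
  finally show ?thesis using False unfolding expm1_coeff_def
    by (simp add: norm_divide divide_right_mono)
qed

lemma summable_expm1_coeff:
  assumes "Y \<in> carrier_mat N N" "a < N" "b < N"
  shows "summable (\<lambda>i. expm1_coeff Y k a b i * z ^ i)"
  by (rule summable_powser_fact_bounded[OF expm1_coeff_bound[OF assms]])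

lemma expm1_over_dim[simp]:
  "dim_row (expm1_over k t Y) = dim_row Y" "dim_col (expm1_over k t Y) = dim_col Y"
  unfolding expm1_over_def by simp_all

lemma expm1_over_carrier_mat[simp]: "Y \<in> carrier_mat N N \<Longrightarrow> expm1_over k t Y \<in> carrier_mat N N"
  unfolding expm1_over_def by auto

lemma expm1_over_entry:
  assumes "Y \<in> carrier_mat N N" "a < N" "b < N"
  shows "expm1_over k t Y $$ (a, b) = (\<Sum>i. expm1_coeff Y k a b i * (- of_real t) ^ i)"
proof -
  let ?f = "\<lambda>i. expm1_coeff Y k a b i * (- of_real t) ^ i"
  have "expm1_over k t Y $$ (a, b) = (\<Sum>j. (of_real (- t)) ^ Suc j / of_nat (fact (Suc j))
      * (Y ^\<^sub>m (k * Suc j - 1)) $$ (a, b))"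
    using assms unfolding expm1_over_def by (subst index_mat) (auto simp del: of_real_minus)
  also have "\<dots> = (\<Sum>j. ?f (Suc j))"
    by (intro suminf_cong)
      (simp only: expm1_coeff_def Suc_not_Zero if_False of_nat_fact of_real_minus times_divide_eq_left
        times_divide_eq_right mult.commute)
  also have "\<dots> = suminf ?f - ?f 0"
    by (rule suminf_split_head[OF summable_expm1_coeff[OF assms]])
  also have "\<dots> = suminf ?f" by (simp add: expm1_coeff_def)
  finally show ?thesis .
qed

lemma expm1_over_zero:
  assumes "Y \<in> carrier_mat N N"
  shows "expm1_over k 0 Y = 0\<^sub>m N N"
  by (rule eq_matI) (use assms in \<open>auto simp: expm1_over_def\<close>)

lemma expm1_over_mult_pow_entry:
  assumes Y: "Y \<in> carrier_mat N N" and ab: "a < N" "b < N"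
  shows "(expm1_over k t Y * Y ^\<^sub>m q) $$ (a, b)
    = (\<Sum>i. if i = 0 then 0 else (Y ^\<^sub>m (k * i - 1 + q)) $$ (a, b) / fact i * (- of_real t) ^ i)"
proof -
  have "(expm1_over k t Y * Y ^\<^sub>m q) $$ (a, b)
      = (\<Sum>l<N. (\<Sum>i. expm1_coeff Y k a l i * (- of_real t) ^ i) * (Y ^\<^sub>m q) $$ (l, b))"
    using assms by (auto simp: index_mult_mat_sum[of _ N N _ N] expm1_over_entry intro!: sum.cong
        simp del: index_mult_mat)
  also have "\<dots> = (\<Sum>i. \<Sum>l<N. expm1_coeff Y k a l i * (- of_real t) ^ i * (Y ^\<^sub>m q) $$ (l, b))"
    by (rule sum_suminf_mult_right) (rule summable_expm1_coeff[OF Y ab(1)], simp)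
  also have "\<dots> = (\<Sum>i. if i = 0 then 0 else (Y ^\<^sub>m (k * i - 1 + q)) $$ (a, b) / fact i * (- of_real t) ^ i)"
  proof (rule suminf_cong)
    fix i
    show "(\<Sum>l<N. expm1_coeff Y k a l i * (- of_real t) ^ i * (Y ^\<^sub>m q) $$ (l, b))
      = (if i = 0 then 0 else (Y ^\<^sub>m (k * i - 1 + q)) $$ (a, b) / fact i * (- of_real t) ^ i)"
      using pow_mat_entry_add[OF Y ab, of "k * i - 1" q, symmetric]
      by (simp add: expm1_coeff_def sum_distrib_left sum_distrib_right sum_divide_distrib mult_ac)
  qed
  finally show ?thesis .
qed

lemma pow_mult_expm1_over_entry:
  assumes Y: "Y \<in> carrier_mat N N" and ab: "a < N" "b < N"
  shows "(Y ^\<^sub>m q * expm1_over k t Y) $$ (a, b)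
    = (\<Sum>i. if i = 0 then 0 else (Y ^\<^sub>m (q + (k * i - 1))) $$ (a, b) / fact i * (- of_real t) ^ i)"
proof -
  have "(Y ^\<^sub>m q * expm1_over k t Y) $$ (a, b)
      = (\<Sum>l<N. (Y ^\<^sub>m q) $$ (a, l) * (\<Sum>i. expm1_coeff Y k l b i * (- of_real t) ^ i))"
    using assms by (auto simp: index_mult_mat_sum[of _ N N _ N] expm1_over_entry intro!: sum.cong
        simp del: index_mult_mat)
  also have "\<dots> = (\<Sum>i. \<Sum>l<N. (Y ^\<^sub>m q) $$ (a, l) * (expm1_coeff Y k l b i * (- of_real t) ^ i))"
    by (rule sum_suminf_mult_left) (rule summable_expm1_coeff[OF Y _ ab(2)], simp)
  also have "\<dots> = (\<Sum>i. if i = 0 then 0 else (Y ^\<^sub>m (q + (k * i - 1))) $$ (a, b) / fact i * (- of_real t) ^ i)"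
  proof (rule suminf_cong)
    fix i
    show "(\<Sum>l<N. (Y ^\<^sub>m q) $$ (a, l) * (expm1_coeff Y k l b i * (- of_real t) ^ i))
      = (if i = 0 then 0 else (Y ^\<^sub>m (q + (k * i - 1))) $$ (a, b) / fact i * (- of_real t) ^ i)"
      using pow_mat_entry_add[OF Y ab, of q "k * i - 1", symmetric]
      by (simp add: expm1_coeff_def sum_distrib_left sum_distrib_right sum_divide_distrib mult_ac)
  qed
  finally show ?thesis .
qed

lemma mexp_pow_minus_one_entry:
  assumes Y: "Y \<in> carrier_mat N N" and ab: "a < N" "b < N"
  shows "(mexp (w \<cdot>\<^sub>m Y ^\<^sub>m k) - 1\<^sub>m N) $$ (a, b) =
      (\<Sum>i. if i = 0 then 0 else (Y ^\<^sub>m (k * i)) $$ (a, b) / fact i * w ^ i)"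
proof -
  have YK: "Y ^\<^sub>m k \<in> carrier_mat N N" using Y by simp
  let ?e = "\<lambda>i. exp_coeff (Y ^\<^sub>m k) a b i * w ^ i"
  let ?g = "\<lambda>i. if i = 0 then 0 else (Y ^\<^sub>m (k * i)) $$ (a, b) / fact i * w ^ i"
  have "(mexp (w \<cdot>\<^sub>m Y ^\<^sub>m k) - 1\<^sub>m N) $$ (a, b) = suminf ?e - ?e 0"
    using mexp_entry[OF YK ab] Y ab by (simp add: exp_coeff_def)
  also have "\<dots> = (\<Sum>i. ?e (Suc i))"
    by (rule suminf_split_head[symmetric, OF summable_exp_coeff[OF YK ab]])
  also have "\<dots> = (\<Sum>i. ?g (Suc i))"
    by (simp add: exp_coeff_def pow_mat_mult[OF Y] del: pow_mat.simps)
  also have "\<dots> = suminf ?g"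
  proof -
    have "summable (\<lambda>i. ?e (Suc i))"
      using summable_Suc_iff[THEN iffD2, OF summable_exp_coeff[OF YK ab]] .
    then have "summable (\<lambda>i. ?g (Suc i))" by (simp add: exp_coeff_def pow_mat_mult[OF Y] del: pow_mat.simps)
    then have "summable ?g" by (rule summable_Suc_iff[THEN iffD1])
    then show ?thesis using suminf_split_head[of ?g] by simp
  qed
  finally show ?thesis .
qed

lemma expm1_over_mult:
  assumes Y: "Y \<in> carrier_mat N N" and k: "k \<ge> 1"
  shows "expm1_over k t Y * Y = mexp ((- of_real t) \<cdot>\<^sub>m Y ^\<^sub>m k) - 1\<^sub>m N"
proof (rule eq_matI)
  fix a b assume "a < dim_row (mexp ((- of_real t) \<cdot>\<^sub>m Y ^\<^sub>m k) - 1\<^sub>m N)"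
    "b < dim_col (mexp ((- of_real t) \<cdot>\<^sub>m Y ^\<^sub>m k) - 1\<^sub>m N)"
  then have ab: "a < N" "b < N" using Y by auto
  have "k * i - 1 + 1 = k * i" if "i \<noteq> 0" for i using that k by (simp add: Suc_le_eq)
  then show "(expm1_over k t Y * Y) $$ (a, b) = (mexp ((- of_real t) \<cdot>\<^sub>m Y ^\<^sub>m k) - 1\<^sub>m N) $$ (a, b)"
    using expm1_over_mult_pow_entry[OF Y ab, of k t 1] Y
    by (simp add: mexp_pow_minus_one_entry[OF Y ab] cong: if_cong)
qed (use Y in auto)

lemma mult_expm1_over:
  assumes Y: "Y \<in> carrier_mat N N" and k: "k \<ge> 1"
  shows "Y * expm1_over k t Y = mexp ((- of_real t) \<cdot>\<^sub>m Y ^\<^sub>m k) - 1\<^sub>m N"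
proof (rule eq_matI)
  fix a b assume "a < dim_row (mexp ((- of_real t) \<cdot>\<^sub>m Y ^\<^sub>m k) - 1\<^sub>m N)"
    "b < dim_col (mexp ((- of_real t) \<cdot>\<^sub>m Y ^\<^sub>m k) - 1\<^sub>m N)"
  then have ab: "a < N" "b < N" using Y by auto
  have "1 + (k * i - 1) = k * i" if "i \<noteq> 0" for i using that k by (simp add: Suc_le_eq)
  then show "(Y * expm1_over k t Y) $$ (a, b) = (mexp ((- of_real t) \<cdot>\<^sub>m Y ^\<^sub>m k) - 1\<^sub>m N) $$ (a, b)"
    using pow_mult_expm1_over_entry[OF Y ab, of 1 k t] Y
    by (simp add: mexp_pow_minus_one_entry[OF Y ab] cong: if_cong)
qed (use Y in auto)

lemma expm1_over_has_vector_derivative: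
  assumes Y: "Y \<in> carrier_mat N N" and k: "k \<ge> 1" and ab: "a < N" "b < N"
  shows "((\<lambda>s. expm1_over k s Y $$ (a, b)) has_vector_derivative
           (- (Y ^\<^sub>m (k - 1)) - expm1_over k t Y * Y ^\<^sub>m k) $$ (a, b)) (at t)"
proof -
  define c where "c = expm1_coeff Y k a b"
  let ?w = "- of_real t :: complex"
  let ?P = "(Y ^\<^sub>m (k - 1)) $$ (a, b)"
  let ?u = "\<lambda>i::nat. if i = 0 then ?P else 0"
  let ?v = "\<lambda>i. if i = 0 then 0 else (Y ^\<^sub>m (k * i - 1 + k)) $$ (a, b) / fact i * ?w ^ i"
  have fd: "((\<lambda>z. \<Sum>i. c i * z ^ i) has_field_derivative (\<Sum>i. diffs c i * z ^ i)) (at z)" for z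
    unfolding c_def by (rule powser_fact_bounded_has_field_derivative[OF expm1_coeff_bound[OF Y ab]])
  have "((\<lambda>z. \<Sum>i. c i * (- z) ^ i) has_field_derivative (\<Sum>i. diffs c i * ?w ^ i) * (- 1)) (at (of_real t))"
    by (rule DERIV_chain2[OF fd]) (auto intro!: derivative_eq_intros)
  from has_vector_derivative_real_field[OF this, of UNIV]
  have deriv: "((\<lambda>s. expm1_over k s Y $$ (a, b)) has_vector_derivative - (\<Sum>i. diffs c i * ?w ^ i)) (at t)"
    using expm1_over_entry[OF Y ab] unfolding c_def by simp
  have coeff_split: "diffs c i * ?w ^ i = ?u i + ?v i" for i
  proof (cases i)
    case 0 then show ?thesis by (simp add: diffs_def c_def expm1_coeff_def)
  next
    case (Suc j)
    have "k * Suc (Suc j) - 1 = k * Suc j - 1 + k" using k by (simp add: algebra_simps)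
    moreover have "(fact (Suc (Suc j)) :: complex) = of_nat (Suc (Suc j)) * fact (Suc j)"
      by (rule fact_Suc)
    ultimately show ?thesis using Suc
      by (simp add: diffs_def c_def expm1_coeff_def del: of_nat_Suc fact_Suc)
  qed
  have su: "?u sums ?P" using sums_single[of 0 "\<lambda>_. ?P"] by simp
  have "summable (\<lambda>i. diffs c i * ?w ^ i)"
    unfolding c_def by (rule termdiff_converges_all[OF summable_expm1_coeff[OF Y ab]])
  then have "summable (\<lambda>i. diffs c i * ?w ^ i - ?u i)" using su summable_diff sums_summable by blast
  then have sv: "summable ?v" by (simp add: coeff_split)
  have "(\<Sum>i. diffs c i * ?w ^ i) = ?P + suminf ?v"
    unfolding coeff_split using suminf_add[OF sums_summable[OF su] sv] sums_unique[OF su] by simp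
  also have "\<dots> = ?P + (expm1_over k t Y * Y ^\<^sub>m k) $$ (a, b)"
    using expm1_over_mult_pow_entry[OF Y ab, of k t k] by simp
  finally show ?thesis using deriv Y ab by simp
qed

section \<open>The explicit solution\<close>

definition xflow :: "nat \<Rightarrow> real \<Rightarrow> complex mat \<Rightarrow> complex mat \<Rightarrow> complex mat" where
  "xflow k t X Y = X * mexp ((- of_real t) \<cdot>\<^sub>m Y ^\<^sub>m k) + expm1_over k t Y"

lemma xflow_carrier_mat[simp]:
  "X \<in> carrier_mat N N \<Longrightarrow> Y \<in> carrier_mat N N \<Longrightarrow> xflow k t X Y \<in> carrier_mat N N"
  unfolding xflow_def by simp

lemma xflow_zero:
  assumes "X \<in> carrier_mat N N" "Y \<in> carrier_mat N N"
  shows "xflow k 0 X Y = X"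
  using assms mexp_zero[of "Y ^\<^sub>m k" N] expm1_over_zero[of Y N k] by (simp add: xflow_def)

lemma xflow_has_vector_derivative:
  assumes X: "X \<in> carrier_mat N N" and Y: "Y \<in> carrier_mat N N" and k: "k \<ge> 1"
    and ab: "a < N" "b < N"
  shows "((\<lambda>s. xflow k s X Y $$ (a, b)) has_vector_derivative
           (- (Y ^\<^sub>m (k - 1)) - xflow k t X Y * Y ^\<^sub>m k) $$ (a, b)) (at t)"
proof -
  let ?K = "Y ^\<^sub>m k"
  define E where "E s = mexp ((- of_real s) \<cdot>\<^sub>m ?K)" for s :: real
  define S where "S s = expm1_over k s Y" for s :: real
  have K: "?K \<in> carrier_mat N N" using Y by simp
  have E: "E s \<in> carrier_mat N N" for s unfolding E_def using K by simp
  have S: "S s \<in> carrier_mat N N" for s unfolding S_def using Y by simp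
  have dXE: "((\<lambda>s. (X * E s) $$ (a, b)) has_vector_derivative (0\<^sub>m N N * E t + X * (- (?K * E t))) $$ (a, b)) (at t)"
  proof (rule has_vector_derivative_mult_mat_entry[where F = "\<lambda>s. X" and N = N])
    fix a b assume ab: "a < N" "b < N"
    show "((\<lambda>s. X $$ (a, b)) has_vector_derivative 0\<^sub>m N N $$ (a, b)) (at t)" using ab by simp
    show "((\<lambda>s. E s $$ (a, b)) has_vector_derivative (- (?K * E t)) $$ (a, b)) (at t)"
      unfolding E_def by (rule mexp_has_vector_derivative_neg[OF K ab])
  qed (use X K E ab in \<open>auto intro!: mult_carrier_mat uminus_carrier_mat\<close>)
  have dS: "((\<lambda>s. S s $$ (a, b)) has_vector_derivative (- (Y ^\<^sub>m (k - 1)) - S t * ?K) $$ (a, b)) (at t)"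
    unfolding S_def by (rule expm1_over_has_vector_derivative[OF Y k ab])
  have "(X * E t + S t) * ?K = X * (?K * E t) + S t * ?K"
  proof -
    have "(X * E t + S t) * ?K = X * (E t * ?K) + S t * ?K"
      using X E S K by (simp add: add_mult_distrib_mat[of _ N N] assoc_mult_mat[of _ N N _ N _ N])
    also have "E t * ?K = ?K * E t" unfolding E_def by (rule mexp_commute[OF K])
    finally show ?thesis .
  qed
  then have "(0\<^sub>m N N * E t + X * (- (?K * E t))) $$ (a, b) + (- (Y ^\<^sub>m (k - 1)) - S t * ?K) $$ (a, b)
      = (- (Y ^\<^sub>m (k - 1)) - (X * E t + S t) * ?K) $$ (a, b)"
    using X K E[of t] S[of t] ab Y by (simp add: carrier_matD)
  moreover have "(\<lambda>s. xflow k s X Y $$ (a, b)) = (\<lambda>s. (X * E s) $$ (a, b) + S s $$ (a, b))"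
    unfolding xflow_def E_def S_def using X Y ab by (intro ext) simp
  ultimately show ?thesis
    using has_vector_derivative_add[OF dXE dS] unfolding xflow_def E_def S_def by simp
qed

lemma one_plus_add_minus_one:
  fixes A E :: "'a :: comm_ring_1 mat"
  assumes "A \<in> carrier_mat N N" "E \<in> carrier_mat N N"
  shows "1\<^sub>m N + (A + (E - 1\<^sub>m N)) = 1\<^sub>m N * E + A"
  by (rule eq_matI) (use assms in auto)

lemma one_plus_xflow_mult:
  assumes X: "X \<in> carrier_mat N N" and Y: "Y \<in> carrier_mat N N" and k: "k \<ge> 1"
  shows "1\<^sub>m N + xflow k t X Y * Y = (1\<^sub>m N + X * Y) * mexp ((- of_real t) \<cdot>\<^sub>m Y ^\<^sub>m k)"
proof -
  let ?E = "mexp ((- of_real t) \<cdot>\<^sub>m Y ^\<^sub>m k)"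
  have K: "Y ^\<^sub>m k \<in> carrier_mat N N" and E: "?E \<in> carrier_mat N N" using Y by simp_all
  have "?E * Y = Y * ?E" by (rule commute_mexp[OF K Y pow_mat_commute[OF Y], symmetric])
  then have e: "xflow k t X Y * Y = (X * Y) * ?E + (?E - 1\<^sub>m N)"
    using X Y E expm1_over_mult[OF Y k, of t]
    by (simp add: xflow_def add_mult_distrib_mat[of _ N N] assoc_mult_mat[of _ N N _ N _ N])
  moreover have "(1\<^sub>m N + X * Y) * ?E = 1\<^sub>m N * ?E + (X * Y) * ?E"
    by (rule add_mult_distrib_mat[of _ N N]) (use X Y E in auto)
  ultimately show ?thesis using one_plus_add_minus_one[of "(X * Y) * ?E" N ?E] X Y E by simp
qed

lemma one_plus_mult_xflow:
  assumes X: "X \<in> carrier_mat N N" and Y: "Y \<in> carrier_mat N N" and k: "k \<ge> 1"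
  shows "1\<^sub>m N + Y * xflow k t X Y = (1\<^sub>m N + Y * X) * mexp ((- of_real t) \<cdot>\<^sub>m Y ^\<^sub>m k)"
proof -
  let ?E = "mexp ((- of_real t) \<cdot>\<^sub>m Y ^\<^sub>m k)"
  have E: "?E \<in> carrier_mat N N" using Y by simp
  have "Y * xflow k t X Y = Y * (X * ?E) + Y * expm1_over k t Y"
    unfolding xflow_def by (rule mult_add_distrib_mat[of _ N N]) (use X Y E in auto)
  then have e: "Y * xflow k t X Y = (Y * X) * ?E + (?E - 1\<^sub>m N)"
    using X Y E mult_expm1_over[OF Y k, of t] by (simp add: assoc_mult_mat[of _ N N _ N _ N])
  moreover have "(1\<^sub>m N + Y * X) * ?E = 1\<^sub>m N * ?E + (Y * X) * ?E"
    by (rule add_mult_distrib_mat[of _ N N]) (use X Y E in auto)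
  ultimately show ?thesis using one_plus_add_minus_one[of "(Y * X) * ?E" N ?E] X Y E by simp
qed

section \<open>Cyclic block matrices\<close>

lemma block_index_less: "(r::nat) < m \<Longrightarrow> i < n \<Longrightarrow> r * n + i < n * m"
proof -
  assume "r < m" "i < n"
  then have "r * n + i < (r + 1) * n" by simp
  also have "\<dots> \<le> m * n" using \<open>r < m\<close> by (intro mult_right_mono) auto
  finally show ?thesis by (simp add: mult.commute)
qed

lemma block_div_less: "(c::nat) < n * m \<Longrightarrow> c div n < m"
  by (simp add: less_mult_imp_div_less mult.commute)

lemma sum_block_support:
  fixes B m n :: nat
  assumes "B < m" "\<And>c. c < n * m \<Longrightarrow> c div n \<noteq> B \<Longrightarrow> g c = 0"
  shows "(\<Sum>c<n * m. g c) = (\<Sum>i<n. g (B * n + i))"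
proof -
  have inj: "inj_on (\<lambda>i. B * n + i) {..<n}" by (auto simp: inj_on_def)
  have "(\<Sum>c<n * m. g c) = (\<Sum>c\<in>(\<lambda>i. B * n + i) ` {..<n}. g c)"
  proof (rule sum.mono_neutral_right)
    show "\<forall>c\<in>{..<n * m} - (\<lambda>i. B * n + i) ` {..<n}. g c = 0"
    proof
      fix c assume c: "c \<in> {..<n * m} - (\<lambda>i. B * n + i) ` {..<n}"
      have "c div n \<noteq> B"
      proof
        assume "c div n = B"
        then have "c = B * n + c mod n" using div_mult_mod_eq[of c n] by simp
        moreover have "c mod n < n" using c by (cases "n = 0") auto
        ultimately show False using c by blast
      qed
      then show "g c = 0" using assms(2) c by auto
    qed
  qed (use block_index_less[OF assms(1)] in auto)
  also have "\<dots> = (\<Sum>i<n. g (B * n + i))" by (rule sum.reindex[OF inj, unfolded comp_def])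
  finally show ?thesis .
qed

lemma cs_less: "m \<ge> 1 \<Longrightarrow> cs m r < m" unfolding cs_def by simp

lemma cp_less: "m \<ge> 1 \<Longrightarrow> cp m r < m" unfolding cp_def by simp

lemma cp_cs:
  assumes "m \<ge> 1" "s < m"
  shows "cp m (cs m s) = s"
proof (cases "s + 1 < m")
  case True
  then have "cp m (cs m s) = (s + m) mod m" unfolding cp_def cs_def by simp
  then show ?thesis using assms by simp
next
  case False
  then have "s + 1 = m" using assms by simp
  then show ?thesis unfolding cp_def cs_def by simp
qed

lemma cs_cp:
  assumes "m \<ge> 1" "s < m"
  shows "cs m (cp m s) = s"
proof -
  have "cs m (cp m s) = (s + m - 1 + 1) mod m" unfolding cp_def cs_def by (simp add: mod_Suc_eq)
  also have "\<dots> = s" using assms by simp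
  finally show ?thesis .
qed

lemma cs_inject: "m \<ge> 1 \<Longrightarrow> r < m \<Longrightarrow> s < m \<Longrightarrow> cs m r = cs m s \<Longrightarrow> r = s"
  by (metis cp_cs)

lemma sum_kd:
  fixes f :: "nat \<Rightarrow> complex"
  assumes "s < m"
  shows "(\<Sum>r<m. kd r s * f r) = f s" "(\<Sum>r<m. kd s r * f r) = f s"
    "(\<Sum>r<m. f r * kd r s) = f s" "(\<Sum>r<m. f r * kd s r) = f s"
  using assms by (simp_all add: kd_def if_distrib if_distribR sum.delta sum.delta' cong: if_cong)

lemma sum_kd_cp:
  fixes f :: "nat \<Rightarrow> complex"
  assumes "m \<ge> 1" "s < m"
  shows "(\<Sum>r<m. kd s (cp m r) * f r) = f (cs m s)"
proof -
  have "(\<Sum>r<m. kd s (cp m r) * f r) = (\<Sum>r<m. kd r (cs m s) * f r)"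
    by (intro sum.cong refl) (use assms cp_cs cs_cp in \<open>auto simp: kd_def\<close>)
  then show ?thesis using sum_kd(1)[OF cs_less[OF assms(1), of s], of f] by simp
qed

lemma sum_kd_cs:
  fixes f :: "nat \<Rightarrow> complex"
  assumes "m \<ge> 1" "s < m"
  shows "(\<Sum>r<m. kd s (cs m r) * f r) = f (cp m s)"
proof -
  have "(\<Sum>r<m. kd s (cs m r) * f r) = (\<Sum>r<m. kd r (cp m s) * f r)"
    by (intro sum.cong refl) (use assms cp_cs cs_cp in \<open>auto simp: kd_def\<close>)
  then show ?thesis using sum_kd(1)[OF cp_less[OF assms(1), of s], of f] by simp
qed

lemma bigX_carrier_mat[simp]: "bigX m n p \<in> carrier_mat (n * m) (n * m)"
  unfolding bigX_def by simp

lemma bigY_carrier_mat[simp]: "bigY m n p \<in> carrier_mat (n * m) (n * m)"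
  unfolding bigY_def by simp

lemma bigX_bigY_dim[simp]: "dim_row (bigY m n p) = n * m" "dim_col (bigY m n p) = n * m"
  "dim_row (bigX m n p) = n * m" "dim_col (bigX m n p) = n * m"
  unfolding bigY_def bigX_def by simp_all

lemma bigX_block_entry:
  assumes "m \<ge> 1" "r < m" "i < n" "j < n"
  shows "bigX m n p $$ (r * n + i, cs m r * n + j) = p (CX r i j)"
  using assms block_index_less[OF cs_less[OF assms(1)] assms(4)] block_index_less[OF assms(2,3)]
  unfolding bigX_def by simp

lemma bigY_block_entry:
  assumes "m \<ge> 1" "r < m" "i < n" "j < n"
  shows "bigY m n p $$ (cs m r * n + i, r * n + j) = p (CY r i j)"
  using assms block_index_less[OF cs_less[OF assms(1)] assms(3)] block_index_less[OF assms(2,4)]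
  unfolding bigY_def by simp

lemma bigX_entry_eq_0:
  assumes "a < n * m" "b < n * m" "b div n \<noteq> cs m (a div n)"
  shows "bigX m n p $$ (a, b) = 0"
  using assms unfolding bigX_def by simp

lemma bigY_entry_eq_0:
  assumes "a < n * m" "b < n * m" "a div n \<noteq> cs m (b div n)"
  shows "bigY m n p $$ (a, b) = 0"
  using assms unfolding bigY_def by simp

lemma block_index_bounds:
  fixes a n m :: nat
  assumes "a < n * m"
  shows "a div n < m" "a mod n < n"
  using assms block_div_less[OF assms] by (auto intro: pos_mod_bound)
    (metis mod_less_divisor neq0_conv mult_0 not_less_zero)

lemma mult_bigY_entry:
  assumes m1: "m \<ge> 1" and M: "M \<in> carrier_mat (n * m) (n * m)"
    and a: "a < n * m" and r: "r < m" and l: "l < n"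
  shows "(M * bigY m n p) $$ (a, r * n + l) = (\<Sum>i<n. M $$ (a, cs m r * n + i) * p (CY r i l))"
proof -
  have "(M * bigY m n p) $$ (a, r * n + l) = (\<Sum>c<n * m. M $$ (a, c) * bigY m n p $$ (c, r * n + l))"
    by (rule index_mult_mat_sum) (use M a block_index_less[OF r l] in auto)
  also have "\<dots> = (\<Sum>i<n. M $$ (a, cs m r * n + i) * bigY m n p $$ (cs m r * n + i, r * n + l))"
    by (rule sum_block_support[OF cs_less[OF m1]]) (use bigY_entry_eq_0 block_index_less[OF r l] l in auto)
  finally show ?thesis using bigY_block_entry[OF m1 r _ l] by simp
qed

lemma bigY_mult_entry:
  assumes m1: "m \<ge> 1" and M: "M \<in> carrier_mat (n * m) (n * m)"
    and b: "b < n * m" and r: "r < m" and i: "i < n"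
  shows "(bigY m n p * M) $$ (cs m r * n + i, b) = (\<Sum>j<n. p (CY r i j) * M $$ (r * n + j, b))"
proof -
  have csr: "cs m r < m" by (rule cs_less[OF m1])
  have "(bigY m n p * M) $$ (cs m r * n + i, b) = (\<Sum>c<n * m. bigY m n p $$ (cs m r * n + i, c) * M $$ (c, b))"
    by (rule index_mult_mat_sum) (use M b block_index_less[OF csr i] in auto)
  also have "\<dots> = (\<Sum>j<n. bigY m n p $$ (cs m r * n + i, r * n + j) * M $$ (r * n + j, b))"
  proof (rule sum_block_support[OF r])
    fix c assume c: "c < n * m" "c div n \<noteq> r"
    then have "cs m r \<noteq> cs m (c div n)" using cs_inject[OF m1 r block_div_less[OF c(1)]] by auto
    then show "bigY m n p $$ (cs m r * n + i, c) * M $$ (c, b) = 0"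
      using bigY_entry_eq_0[of "cs m r * n + i" n m c p] block_index_less[OF csr i] c i by simp
  qed
  finally show ?thesis using bigY_block_entry[OF m1 r i] by simp
qed

lemma bigX_mult_entry:
  assumes m1: "m \<ge> 1" and M: "M \<in> carrier_mat (n * m) (n * m)"
    and b: "b < n * m" and s: "s < m" and i: "i < n"
  shows "(bigX m n p * M) $$ (s * n + i, b) = (\<Sum>j<n. p (CX s i j) * M $$ (cs m s * n + j, b))"
proof -
  have "(bigX m n p * M) $$ (s * n + i, b) = (\<Sum>c<n * m. bigX m n p $$ (s * n + i, c) * M $$ (c, b))"
    by (rule index_mult_mat_sum) (use M b block_index_less[OF s i] in auto)
  also have "\<dots> = (\<Sum>j<n. bigX m n p $$ (s * n + i, cs m s * n + j) * M $$ (cs m s * n + j, b))"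
    by (rule sum_block_support[OF cs_less[OF m1]]) (use bigX_entry_eq_0 block_index_less[OF s i] i in auto)
  finally show ?thesis using bigX_block_entry[OF m1 s i] by simp
qed

lemma bigX_cong:
  assumes "\<And>r i j. r < m \<Longrightarrow> i < n \<Longrightarrow> j < n \<Longrightarrow> p (CX r i j) = q (CX r i j)"
  shows "bigX m n p = bigX m n q"
proof (rule eq_matI)
  fix a b assume "a < dim_row (bigX m n q)" "b < dim_col (bigX m n q)"
  then have "a < n * m" "b < n * m" by simp_all
  then show "bigX m n p $$ (a, b) = bigX m n q $$ (a, b)"
    unfolding bigX_def using assms block_index_bounds by simp
qed simp_all

lemma bigY_cong:
  assumes "\<And>r i j. r < m \<Longrightarrow> i < n \<Longrightarrow> j < n \<Longrightarrow> p (CY r i j) = q (CY r i j)"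
  shows "bigY m n p = bigY m n q"
proof (rule eq_matI)
  fix a b assume "a < dim_row (bigY m n q)" "b < dim_col (bigY m n q)"
  then have "a < n * m" "b < n * m" by simp_all
  then show "bigY m n p $$ (a, b) = bigY m n q $$ (a, b)"
    unfolding bigY_def using assms block_index_bounds by simp
qed simp_all

lemma coords_iff[simp]:
  "CX r i j \<in> coords m n d \<longleftrightarrow> r < m \<and> i < n \<and> j < n"
  "CY r i j \<in> coords m n d \<longleftrightarrow> r < m \<and> i < n \<and> j < n"
  "CV s a j \<in> coords m n d \<longleftrightarrow> s < m \<and> 1 \<le> a \<and> a \<le> d s \<and> j < n"
  "CW s a j \<in> coords m n d \<longleftrightarrow> s < m \<and> 1 \<le> a \<and> a \<le> d s \<and> j < n"
  unfolding coords_def by auto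

lemma finite_coords: "finite (coords m n d)"
proof -
  have "coords m n d \<subseteq> (\<lambda>(r, i, j). CX r i j) ` ({..<m} \<times> {..<n} \<times> {..<n})
      \<union> (\<lambda>(r, i, j). CY r i j) ` ({..<m} \<times> {..<n} \<times> {..<n})
      \<union> (\<lambda>(s, a, j). CV s a j) ` (SIGMA s:{..<m}. {1..d s} \<times> {..<n})
      \<union> (\<lambda>(s, a, j). CW s a j) ` (SIGMA s:{..<m}. {1..d s} \<times> {..<n})"
    unfolding coords_def by (auto simp: image_iff)
  moreover have "finite (SIGMA s:{..<m}. {1..d s} \<times> {..<n})" by auto
  ultimately show ?thesis by (auto intro: finite_subset)
qed

section \<open>Partial derivatives of the Hamiltonian\<close>

text \<open>\<open>pow_mat_dir j M E\<close> is the directional derivative of \<open>M\<^sup>j\<close> in direction \<open>E\<close>.\<close>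
primrec pow_mat_dir :: "nat \<Rightarrow> complex mat \<Rightarrow> complex mat \<Rightarrow> complex mat" where
  "pow_mat_dir 0 M E = 0\<^sub>m (dim_row M) (dim_row M)"
| "pow_mat_dir (Suc j) M E = pow_mat_dir j M E * M + M ^\<^sub>m j * E"

lemma pow_mat_dir_carrier_mat:
  assumes "M \<in> carrier_mat N N" "E \<in> carrier_mat N N"
  shows "pow_mat_dir j M E \<in> carrier_mat N N"
  using assms by (induction j) auto

lemma pow_mat_line_has_field_derivative:
  assumes B: "B \<in> carrier_mat N N" and E: "E \<in> carrier_mat N N" and ab: "a < N" "b < N"
  shows "((\<lambda>z. ((B + (z - z0) \<cdot>\<^sub>m E) ^\<^sub>m j) $$ (a, b)) has_field_derivative
           (pow_mat_dir j (B + (z - z0) \<cdot>\<^sub>m E) E) $$ (a, b)) (at z)"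
  using ab
proof (induction j arbitrary: a b)
  case 0
  then show ?case using B E by simp
next
  case (Suc j)
  define M where "M z = B + (z - z0) \<cdot>\<^sub>m E" for z
  have MC: "M z \<in> carrier_mat N N" for z unfolding M_def using B E by auto
  have Me: "M z $$ (c, b) = B $$ (c, b) + (z - z0) * E $$ (c, b)" if "c < N" for z c
    unfolding M_def using B E that Suc.prems by simp
  have DC: "pow_mat_dir j (M z) E \<in> carrier_mat N N" by (rule pow_mat_dir_carrier_mat[OF MC E])
  have f: "(\<lambda>z. (M z ^\<^sub>m Suc j) $$ (a, b))
      = (\<lambda>z. \<Sum>c<N. (M z ^\<^sub>m j) $$ (a, c) * (B $$ (c, b) + (z - z0) * E $$ (c, b)))"
  proof
    fix z
    have "(M z ^\<^sub>m Suc j) $$ (a, b) = (\<Sum>c<N. (M z ^\<^sub>m j) $$ (a, c) * M z $$ (c, b))"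
      by (simp only: pow_mat.simps) (rule index_mult_mat_sum, use MC Suc.prems in auto)
    then show "(M z ^\<^sub>m Suc j) $$ (a, b)
        = (\<Sum>c<N. (M z ^\<^sub>m j) $$ (a, c) * (B $$ (c, b) + (z - z0) * E $$ (c, b)))"
      by (simp add: Me)
  qed
  have "((\<lambda>z. \<Sum>c<N. (M z ^\<^sub>m j) $$ (a, c) * (B $$ (c, b) + (z - z0) * E $$ (c, b))) has_field_derivative
      (\<Sum>c<N. (pow_mat_dir j (M z) E) $$ (a, c) * (B $$ (c, b) + (z - z0) * E $$ (c, b))
        + (M z ^\<^sub>m j) $$ (a, c) * E $$ (c, b))) (at z)"
  proof (rule DERIV_sum)
    fix c assume c: "c \<in> {..<N}"
    have d1: "((\<lambda>z. (M z ^\<^sub>m j) $$ (a, c)) has_field_derivative (pow_mat_dir j (M z) E) $$ (a, c)) (at z)"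
      unfolding M_def using Suc.IH[of a c] Suc.prems c by simp
    have d2: "((\<lambda>z. B $$ (c, b) + (z - z0) * E $$ (c, b)) has_field_derivative E $$ (c, b)) (at z)"
      by (auto intro!: derivative_eq_intros)
    show "((\<lambda>z. (M z ^\<^sub>m j) $$ (a, c) * (B $$ (c, b) + (z - z0) * E $$ (c, b))) has_field_derivative
        (pow_mat_dir j (M z) E) $$ (a, c) * (B $$ (c, b) + (z - z0) * E $$ (c, b))
        + (M z ^\<^sub>m j) $$ (a, c) * E $$ (c, b)) (at z)"
      using DERIV_mult'[OF d1 d2] by (simp add: add.commute)
  qed
  moreover have "(\<Sum>c<N. (pow_mat_dir j (M z) E) $$ (a, c) * (B $$ (c, b) + (z - z0) * E $$ (c, b))
      + (M z ^\<^sub>m j) $$ (a, c) * E $$ (c, b)) = (pow_mat_dir (Suc j) (M z) E) $$ (a, b)"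
  proof -
    have "(pow_mat_dir (Suc j) (M z) E) $$ (a, b)
        = (pow_mat_dir j (M z) E * M z) $$ (a, b) + (M z ^\<^sub>m j * E) $$ (a, b)"
      unfolding pow_mat_dir.simps by (rule index_add_mat) (use DC MC[of z] E Suc.prems in auto)
    then show ?thesis using DC MC E Suc.prems
      by (simp add: index_mult_mat_sum[of _ N N _ N] Me sum.distrib del: index_mult_mat)
  qed
  ultimately have "((\<lambda>z. (M z ^\<^sub>m Suc j) $$ (a, b)) has_field_derivative
      (pow_mat_dir (Suc j) (M z) E) $$ (a, b)) (at z)"
    unfolding f by simp
  then show ?case unfolding M_def .
qed

lemma mtrace_pow_mat_dir_mult:
  assumes B: "B \<in> carrier_mat N N" and E: "E \<in> carrier_mat N N"
  shows "C \<in> carrier_mat N N \<Longrightarrow> C * B = B * C \<Longrightarrow>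
     mtrace (pow_mat_dir j B E * C) = of_nat j * mtrace (E * B ^\<^sub>m (j - 1) * C)"
proof (induction j arbitrary: C)
  case 0
  then show ?case using B by (simp add: mtrace_def)
next
  case (Suc j)
  have DC: "pow_mat_dir j B E \<in> carrier_mat N N" by (rule pow_mat_dir_carrier_mat[OF B E])
  have BC: "B * C \<in> carrier_mat N N" using B Suc.prems by simp
  have cBC: "(B * C) * B = B * (B * C)"
    using B Suc.prems by (simp add: assoc_mult_mat[of B N N C N B N] assoc_mult_mat[of B N N B N C N])
  have "pow_mat_dir (Suc j) B E * C = (pow_mat_dir j B E * B) * C + (B ^\<^sub>m j * E) * C"
    by simp (rule add_mult_distrib_mat[of _ N N], use DC B E Suc.prems in auto)
  also have "\<dots> = pow_mat_dir j B E * (B * C) + B ^\<^sub>m j * (E * C)"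
    using DC B E Suc.prems by (simp add: assoc_mult_mat[of _ N N _ N C N])
  finally have "mtrace (pow_mat_dir (Suc j) B E * C)
      = mtrace (pow_mat_dir j B E * (B * C)) + mtrace (B ^\<^sub>m j * (E * C))"
    using DC B E Suc.prems by (simp add: mtrace_def sum.distrib)
  also have "mtrace (pow_mat_dir j B E * (B * C)) = of_nat j * mtrace (E * B ^\<^sub>m (j - 1) * (B * C))"
    by (rule Suc.IH[OF BC cBC])
  also have "of_nat j * mtrace (E * B ^\<^sub>m (j - 1) * (B * C)) = of_nat j * mtrace (E * B ^\<^sub>m j * C)"
  proof (cases "j = 0")
    case False
    have Bj: "B ^\<^sub>m j = B ^\<^sub>m (j - 1) * B" using False by (cases j) auto
    have P: "B ^\<^sub>m (j - 1) \<in> carrier_mat N N" using B by simp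
    have "E * B ^\<^sub>m (j - 1) * (B * C) = E * (B ^\<^sub>m (j - 1) * (B * C))"
      by (rule assoc_mult_mat) (use P B E Suc.prems in auto)
    also have "B ^\<^sub>m (j - 1) * (B * C) = (B ^\<^sub>m (j - 1) * B) * C"
      by (rule assoc_mult_mat[symmetric]) (use P B E Suc.prems in auto)
    also have "E * ((B ^\<^sub>m (j - 1) * B) * C) = E * (B ^\<^sub>m (j - 1) * B) * C"
      by (rule assoc_mult_mat[symmetric]) (use P B E Suc.prems in auto)
    finally show ?thesis unfolding Bj by simp
  qed simp
  also have "mtrace (B ^\<^sub>m j * (E * C)) = mtrace (E * B ^\<^sub>m j * C)"
  proof -
    have "mtrace (B ^\<^sub>m j * (E * C)) = mtrace ((E * C) * B ^\<^sub>m j)"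
      by (rule mtrace_mult_commute) (use B E Suc.prems in auto)
    also have "(E * C) * B ^\<^sub>m j = E * B ^\<^sub>m j * C"
      using commute_pow_mat[OF B Suc.prems(1) Suc.prems(2), of j] B E Suc.prems
      by (simp add: assoc_mult_mat[of E N N _ N _ N] assoc_mult_mat[of E N N C N _ N])
    finally show ?thesis .
  qed
  finally show ?case by (simp add: algebra_simps)
qed

definition unit_mat :: "nat \<Rightarrow> nat \<Rightarrow> nat \<Rightarrow> complex mat" where
  "unit_mat N \<alpha> \<beta> = mat N N (\<lambda>(a, b). if a = \<alpha> \<and> b = \<beta> then 1 else 0)"

lemma unit_mat_dim[simp]: "dim_row (unit_mat N \<alpha> \<beta>) = N" "dim_col (unit_mat N \<alpha> \<beta>) = N"
  unfolding unit_mat_def by simp_all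

lemma unit_mat_carrier_mat[simp]: "unit_mat N \<alpha> \<beta> \<in> carrier_mat N N"
  unfolding unit_mat_def by simp

lemma mtrace_unit_mat_mult:
  assumes R: "R \<in> carrier_mat N N" and "\<alpha> < N" "\<beta> < N"
  shows "mtrace (unit_mat N \<alpha> \<beta> * R) = R $$ (\<beta>, \<alpha>)"
proof -
  have "(unit_mat N \<alpha> \<beta> * R) $$ (a, a) = (if a = \<alpha> then R $$ (\<beta>, \<alpha>) else 0)" if "a < N" for a
  proof -
    have "(unit_mat N \<alpha> \<beta> * R) $$ (a, a) = (\<Sum>c<N. unit_mat N \<alpha> \<beta> $$ (a, c) * R $$ (c, a))"
      by (rule index_mult_mat_sum) (use R that in auto)
    also have "\<dots> = (\<Sum>c<N. if c = \<beta> then (if a = \<alpha> then R $$ (\<beta>, a) else 0) else 0)"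
      by (intro sum.cong refl) (use that in \<open>auto simp: unit_mat_def\<close>)
    finally show ?thesis using assms by (simp add: sum.delta')
  qed
  then show ?thesis using assms unfolding mtrace_def by (simp add: sum.delta')
qed

lemma bigY_update_non_CY:
  assumes "\<And>r i j. g \<noteq> CY r i j"
  shows "bigY m n (p(g := z)) = bigY m n p"
  unfolding bigY_def using assms by (intro eq_matI) auto

lemma bigY_update_CY:
  assumes "m \<ge> 1" "r < m" "i < n" "j < n"
  shows "bigY m n (p(CY r i j := z))
    = bigY m n p + (z - p (CY r i j)) \<cdot>\<^sub>m unit_mat (n * m) (cs m r * n + i) (r * n + j)"
proof (rule eq_matI)
  fix a b assume "a < dim_row (bigY m n p + (z - p (CY r i j)) \<cdot>\<^sub>m unit_mat (n * m) (cs m r * n + i) (r * n + j))"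
    "b < dim_col (bigY m n p + (z - p (CY r i j)) \<cdot>\<^sub>m unit_mat (n * m) (cs m r * n + i) (r * n + j))"
  then have ab: "a < n * m" "b < n * m" by (simp_all add: unit_mat_def)
  have "CY (b div n) (a mod n) (b mod n) = CY r i j \<longleftrightarrow> a = cs m r * n + i \<and> b = r * n + j"
    if "a div n = cs m (b div n)"
    using that assms div_mult_mod_eq[of a n] div_mult_mod_eq[of b n] by auto
  then show "bigY m n (p(CY r i j := z)) $$ (a, b)
      = (bigY m n p + (z - p (CY r i j)) \<cdot>\<^sub>m unit_mat (n * m) (cs m r * n + i) (r * n + j)) $$ (a, b)"
    using ab assms by (auto simp: bigY_def unit_mat_def)
qed (simp_all add: unit_mat_def bigY_def)

lemma pdiff_trYk_non_CY:
  assumes "\<And>r i j. g \<noteq> CY r i j"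
  shows "pdiff (trYk m n k) p g = 0"
proof -
  have "(\<lambda>z. trYk m n k (p(g := z))) = (\<lambda>z. trYk m n k p)"
    unfolding trYk_def using bigY_update_non_CY[OF assms] by simp
  then show ?thesis unfolding pdiff_def by (simp add: DERIV_imp_deriv)
qed

text \<open>Entry \<open>(j, i)\<close> of the block of \<open>Y\<^sup>k\<^sup>-\<^sup>1\<close> in block position \<open>(r, r+1)\<close>: the partial derivative of
  \<open>tr(Y\<^sup>k)/k\<close> in \<open>(Y\<^sub>r)\<^sub>i\<^sub>j\<close>.\<close>
definition ypred_blk :: "nat \<Rightarrow> nat \<Rightarrow> nat \<Rightarrow> point \<Rightarrow> nat \<Rightarrow> nat \<Rightarrow> nat \<Rightarrow> complex" where
  "ypred_blk m n k p r j i = (bigY m n p ^\<^sub>m (k - 1)) $$ (r * n + j, cs m r * n + i)"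

lemma pdiff_trYk_CY:
  assumes m: "m \<ge> 1" and k: "k \<ge> 1" and r: "r < m" and i: "i < n" and j: "j < n"
  shows "pdiff (trYk m n k) p (CY r i j) = ypred_blk m n k p r j i"
proof -
  let ?N = "n * m" and ?B = "bigY m n p" and ?z0 = "p (CY r i j)"
  let ?E = "unit_mat ?N (cs m r * n + i) (r * n + j)"
  have B: "?B \<in> carrier_mat ?N ?N" and E: "?E \<in> carrier_mat ?N ?N" by simp_all
  have "((\<lambda>z. (\<Sum>a<?N. ((?B + (z - ?z0) \<cdot>\<^sub>m ?E) ^\<^sub>m k) $$ (a, a)) / of_nat k) has_field_derivative
      (\<Sum>a<?N. (pow_mat_dir k (?B + (?z0 - ?z0) \<cdot>\<^sub>m ?E) ?E) $$ (a, a)) / of_nat k) (at ?z0)"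
    by (intro DERIV_cdivide DERIV_sum pow_mat_line_has_field_derivative[OF B E]) auto
  moreover have "?B + (?z0 - ?z0) \<cdot>\<^sub>m ?E = ?B" by (rule eq_matI) (use B E in auto)
  ultimately have d: "((\<lambda>z. trYk m n k (p(CY r i j := z))) has_field_derivative
      mtrace (pow_mat_dir k ?B ?E) / of_nat k) (at ?z0)"
    unfolding trYk_def mtrace_def bigY_update_CY[OF m r i j]
    using pow_mat_dir_carrier_mat[OF B E, of k] by simp
  have "mtrace (pow_mat_dir k ?B ?E) = mtrace (pow_mat_dir k ?B ?E * 1\<^sub>m ?N)"
    using pow_mat_dir_carrier_mat[OF B E, of k] by simp
  also have "\<dots> = of_nat k * mtrace (?E * ?B ^\<^sub>m (k - 1) * 1\<^sub>m ?N)"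
    by (rule mtrace_pow_mat_dir_mult[OF B E]) (use B in auto)
  also have "\<dots> = of_nat k * ypred_blk m n k p r j i"
    using mtrace_unit_mat_mult[of "?B ^\<^sub>m (k - 1)" ?N] E
      block_index_less[OF cs_less[OF m] i] block_index_less[OF r j]
    by (simp add: ypred_blk_def)
  finally have "mtrace (pow_mat_dir k ?B ?E) / of_nat k = ypred_blk m n k p r j i" using k by simp
  with d show ?thesis unfolding pdiff_def by (simp add: DERIV_imp_deriv)
qed

section \<open>The Hamiltonian vector field\<close>

definition ydiag_blk :: "nat \<Rightarrow> nat \<Rightarrow> nat \<Rightarrow> point \<Rightarrow> nat \<Rightarrow> nat \<Rightarrow> nat \<Rightarrow> complex" where
  "ydiag_blk m n k p r i j = (bigY m n p ^\<^sub>m k) $$ (r * n + i, r * n + j)"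

context
  fixes m n k :: nat and p :: point
  assumes m1: "m \<ge> 1" and k1: "k \<ge> 1"
begin

lemma bigY_pow_pred_right: "bigY m n p ^\<^sub>m k = bigY m n p ^\<^sub>m (k - 1) * bigY m n p"
proof -
  have "k = Suc (k - 1)" using k1 by simp
  then show ?thesis by (metis pow_mat.simps(2))
qed

lemma bigY_pow_pred_left: "bigY m n p ^\<^sub>m k = bigY m n p * bigY m n p ^\<^sub>m (k - 1)"
  unfolding bigY_pow_pred_right by (rule pow_mat_commute[symmetric, OF bigY_carrier_mat])

lemma ypred_blk_mult_Y:
  assumes r: "r < m" and j: "j < n" and l: "l < n"
  shows "(\<Sum>i<n. ypred_blk m n k p r j i * p (CY r i l)) = ydiag_blk m n k p r j l"
  using mult_bigY_entry[OF m1 _ block_index_less[OF r j] r l, of "bigY m n p ^\<^sub>m (k - 1)"]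
  unfolding ydiag_blk_def ypred_blk_def bigY_pow_pred_right by simp

lemma Y_mult_ypred_blk:
  assumes r: "r < m" and i: "i < n" and l: "l < n"
  shows "(\<Sum>j<n. p (CY r i j) * ypred_blk m n k p r j l) = ydiag_blk m n k p (cs m r) i l"
  using bigY_mult_entry[OF m1 _ block_index_less[OF cs_less[OF m1] l] r i, of "bigY m n p ^\<^sub>m (k - 1)"]
  unfolding ydiag_blk_def ypred_blk_def bigY_pow_pred_left by simp

lemma ydiag_blk_commute_Y:
  assumes s: "s < m" and i: "i < n" and l: "l < n"
  shows "(\<Sum>j<n. ydiag_blk m n k p (cs m s) i j * p (CY s j l)) = (\<Sum>j<n. p (CY s i j) * ydiag_blk m n k p s j l)"
proof -
  let ?Y = "bigY m n p" and ?K = "bigY m n p ^\<^sub>m k"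
  have "(?K * ?Y) $$ (cs m s * n + i, s * n + l) = (?Y * ?K) $$ (cs m s * n + i, s * n + l)"
    using pow_mat_commute[OF bigY_carrier_mat] by simp
  then show ?thesis
    using mult_bigY_entry[OF m1 _ block_index_less[OF cs_less[OF m1] i] s l, of ?K]
      bigY_mult_entry[OF m1 _ block_index_less[OF s l] s i, of ?K]
    unfolding ydiag_blk_def by simp
qed

lemma xvelocity_block_entry:
  assumes s: "s < m" and i: "i < n" and l: "l < n"
  shows "(- (bigY m n p ^\<^sub>m (k - 1)) - bigX m n p * bigY m n p ^\<^sub>m k) $$ (s * n + i, cs m s * n + l)
       = - ypred_blk m n k p s i l - (\<Sum>j<n. p (CX s i j) * ydiag_blk m n k p (cs m s) j l)"
  using bigX_mult_entry[OF m1 _ block_index_less[OF cs_less[OF m1] l] s i, of "bigY m n p ^\<^sub>m k"]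
    block_index_less[OF s i] block_index_less[OF cs_less[OF m1] l]
  unfolding ydiag_blk_def ypred_blk_def by simp

end

lemma hamvf_trYk_eq_sum:
  assumes m1: "m \<ge> 1" and k1: "k \<ge> 1"
  shows "hamvf m n d (trYk m n k) p g = (\<Sum>r<m. \<Sum>i<n. \<Sum>j<n. ypred_blk m n k p r j i * qpb m n p (CY r i j) g)"
proof -
  let ?S = "{..<m} \<times> {..<n} \<times> {..<n}"
  let ?h = "\<lambda>(r, i, j). CY r i j"
  let ?f = "\<lambda>g'. pdiff (trYk m n k) p g' * qpb m n p g' g"
  have sub: "?h ` ?S \<subseteq> coords m n d" unfolding coords_def by auto
  have inj: "inj_on ?h ?S" by (auto simp: inj_on_def)
  have "hamvf m n d (trYk m n k) p g = (\<Sum>g'\<in>coords m n d. ?f g')" unfolding hamvf_def ..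
  also have "\<dots> = (\<Sum>g'\<in>?h ` ?S. ?f g')"
  proof (rule sum.mono_neutral_right[OF finite_coords sub])
    show "\<forall>g'\<in>coords m n d - ?h ` ?S. ?f g' = 0"
    proof
      fix g' assume g': "g' \<in> coords m n d - ?h ` ?S"
      have "\<And>r i j. g' \<noteq> CY r i j"
      proof
        fix r i j assume e: "g' = CY r i j"
        then have "r < m" "i < n" "j < n" using g' unfolding coords_def by auto
        then have "CY r i j \<in> ?h ` ?S" by (intro image_eqI[of _ _ "(r, i, j)"]) auto
        then show False using g' e by simp
      qed
      then show "?f g' = 0" using pdiff_trYk_non_CY by simp
    qed
  qed
  also have "\<dots> = (\<Sum>x\<in>?S. ?f (?h x))" by (rule sum.reindex[OF inj, unfolded comp_def])
  also have "\<dots> = (\<Sum>(r, i, j)\<in>?S. ypred_blk m n k p r j i * qpb m n p (CY r i j) g)"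
    by (intro sum.cong refl) (auto simp: pdiff_trYk_CY[OF m1 k1])
  also have "\<dots> = (\<Sum>r<m. \<Sum>i<n. \<Sum>j<n. ypred_blk m n k p r j i * qpb m n p (CY r i j) g)"
    by (simp add: sum.cartesian_product)
  finally show ?thesis .
qed

lemma sum_sum_kd_both:
  fixes F :: "nat \<Rightarrow> nat \<Rightarrow> complex"
  assumes "kk < n" "l < n"
  shows "(\<Sum>i<n. \<Sum>j<n. F i j * (kd i l * kd kk j)) = F l kk"
proof -
  have "(\<Sum>j<n. F i j * (kd i l * kd kk j)) = kd i l * F i kk" for i
  proof -
    have "(\<Sum>j<n. F i j * (kd i l * kd kk j)) = kd i l * (\<Sum>j<n. F i j * kd kk j)"
      by (simp add: sum_distrib_left mult_ac)
    then show ?thesis using sum_kd(4)[OF assms(1), of "F i"] by simp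
  qed
  then have "(\<Sum>i<n. \<Sum>j<n. F i j * (kd i l * kd kk j)) = (\<Sum>i<n. kd i l * F i kk)" by simp
  also have "\<dots> = F l kk" by (rule sum_kd(1)[OF assms(2)])
  finally show ?thesis .
qed

lemma sum_sum_kd_right:
  fixes F :: "nat \<Rightarrow> nat \<Rightarrow> complex"
  assumes "kk < n"
  shows "(\<Sum>i<n. \<Sum>j<n. F i j * kd kk j) = (\<Sum>i<n. F i kk)"
  using sum_kd(4)[OF assms] by simp

lemma sum_sum_kd_left:
  fixes F :: "nat \<Rightarrow> nat \<Rightarrow> complex"
  assumes "l < n"
  shows "(\<Sum>i<n. \<Sum>j<n. F i j * kd i l) = (\<Sum>j<n. F l j)"
  using sum_kd(3)[OF assms] by (subst sum.swap) simp

lemma sum_mult_sum_swap_left: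
  fixes a :: "nat \<Rightarrow> complex"
  shows "(\<Sum>i<n. a i * (\<Sum>q<n. b i q * c q)) = (\<Sum>q<n. (\<Sum>i<n. a i * b i q) * c q)"
  unfolding sum_distrib_left sum_distrib_right by (subst sum.swap) (simp add: mult_ac)

lemma sum_mult_sum_swap_right:
  fixes a :: "nat \<Rightarrow> complex"
  shows "(\<Sum>j<n. a j * (\<Sum>q<n. b q * c q j)) = (\<Sum>q<n. b q * (\<Sum>j<n. c q j * a j))"
  unfolding sum_distrib_left sum_distrib_right by (subst sum.swap) (simp add: mult_ac)

context
  fixes m n k :: nat and p :: point
  assumes m1: "m \<ge> 1" and k1: "k \<ge> 1"
begin

lemma ypred_blk_contract_diag_bracket:
  assumes s: "s < m" and kk: "kk < n" and l: "l < n"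
  shows "(\<Sum>i<n. \<Sum>j<n. ypred_blk m n k p s j i * (kd i l * kd kk j
      + 1/2 * (\<Sum>q<n. p (CY s i q) * p (CX s q l)) * kd kk j
      + 1/2 * kd i l * (\<Sum>q<n. p (CX s kk q) * p (CY s q j))))
    = ypred_blk m n k p s kk l + 1/2 * (\<Sum>q<n. ydiag_blk m n k p s kk q * p (CX s q l))
      + 1/2 * (\<Sum>q<n. p (CX s kk q) * ydiag_blk m n k p (cs m s) q l)"
proof -
  have "(\<Sum>i<n. \<Sum>j<n. ypred_blk m n k p s j i * (kd i l * kd kk j
      + 1/2 * (\<Sum>q<n. p (CY s i q) * p (CX s q l)) * kd kk j
      + 1/2 * kd i l * (\<Sum>q<n. p (CX s kk q) * p (CY s q j))))
    = (\<Sum>i<n. \<Sum>j<n. ypred_blk m n k p s j i * (kd i l * kd kk j))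
      + (\<Sum>i<n. \<Sum>j<n. (1/2 * ypred_blk m n k p s j i * (\<Sum>q<n. p (CY s i q) * p (CX s q l))) * kd kk j)
      + (\<Sum>i<n. \<Sum>j<n. (1/2 * ypred_blk m n k p s j i * (\<Sum>q<n. p (CX s kk q) * p (CY s q j))) * kd i l)"
    by (simp only: sum.distrib[symmetric]) (intro sum.cong refl, simp add: algebra_simps)
  also have "\<dots> = ypred_blk m n k p s kk l
      + (\<Sum>i<n. 1/2 * ypred_blk m n k p s kk i * (\<Sum>q<n. p (CY s i q) * p (CX s q l)))
      + (\<Sum>j<n. 1/2 * ypred_blk m n k p s j l * (\<Sum>q<n. p (CX s kk q) * p (CY s q j)))"
    by (simp only: sum_sum_kd_both[OF kk l] sum_sum_kd_right[OF kk] sum_sum_kd_left[OF l])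
  also have "(\<Sum>i<n. 1/2 * ypred_blk m n k p s kk i * (\<Sum>q<n. p (CY s i q) * p (CX s q l)))
      = 1/2 * (\<Sum>q<n. ydiag_blk m n k p s kk q * p (CX s q l))"
  proof -
    have "(\<Sum>i<n. 1/2 * ypred_blk m n k p s kk i * (\<Sum>q<n. p (CY s i q) * p (CX s q l)))
        = 1/2 * (\<Sum>i<n. ypred_blk m n k p s kk i * (\<Sum>q<n. p (CY s i q) * p (CX s q l)))"
      by (simp add: sum_distrib_left mult_ac)
    also have "\<dots> = 1/2 * (\<Sum>q<n. (\<Sum>i<n. ypred_blk m n k p s kk i * p (CY s i q)) * p (CX s q l))"
      by (simp only: sum_mult_sum_swap_left)
    also have "\<dots> = 1/2 * (\<Sum>q<n. ydiag_blk m n k p s kk q * p (CX s q l))"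
      using ypred_blk_mult_Y[OF m1 k1 s kk] by simp
    finally show ?thesis .
  qed
  also have "(\<Sum>j<n. 1/2 * ypred_blk m n k p s j l * (\<Sum>q<n. p (CX s kk q) * p (CY s q j)))
      = 1/2 * (\<Sum>q<n. p (CX s kk q) * ydiag_blk m n k p (cs m s) q l)"
  proof -
    have "(\<Sum>j<n. 1/2 * ypred_blk m n k p s j l * (\<Sum>q<n. p (CX s kk q) * p (CY s q j)))
        = 1/2 * (\<Sum>j<n. ypred_blk m n k p s j l * (\<Sum>q<n. p (CX s kk q) * p (CY s q j)))"
      by (simp add: sum_distrib_left mult_ac)
    also have "\<dots> = 1/2 * (\<Sum>q<n. p (CX s kk q) * (\<Sum>j<n. p (CY s q j) * ypred_blk m n k p s j l))"
      by (simp only: sum_mult_sum_swap_right)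
    also have "\<dots> = 1/2 * (\<Sum>q<n. p (CX s kk q) * ydiag_blk m n k p (cs m s) q l)"
      using Y_mult_ypred_blk[OF m1 k1 s _ l] by simp
    finally show ?thesis .
  qed
  finally show ?thesis .
qed

lemma hamvf_sum_CX:
  assumes s: "s < m" and kk: "kk < n" and l: "l < n"
  shows "(\<Sum>r<m. \<Sum>i<n. \<Sum>j<n. ypred_blk m n k p r j i * qpb m n p (CY r i j) (CX s kk l))
       = (- (bigY m n p ^\<^sub>m (k - 1)) - bigX m n p * bigY m n p ^\<^sub>m k) $$ (s * n + kk, cs m s * n + l)"
proof -
  have cps: "cp m s < m" and css: "cs m s < m" using cp_less cs_less m1 by auto
  have bracket: "qpb m n p (CY r i j) (CX s kk l) = - (kd r s * (kd i l * kd kk j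
      + 1/2 * (\<Sum>q<n. p (CY s i q) * p (CX s q l)) * kd kk j
      + 1/2 * kd i l * (\<Sum>q<n. p (CX s kk q) * p (CY s q j)))
      - 1/2 * kd r (cp m s) * p (CX s i l) * p (CY (cp m s) kk j)
      + 1/2 * kd r (cs m s) * p (CY (cs m s) i l) * p (CX s kk j))" for r i j
    by (simp add: qpb_def)
  define S1 where "S1 r = (\<Sum>i<n. \<Sum>j<n. ypred_blk m n k p r j i * (kd i l * kd kk j
      + 1/2 * (\<Sum>q<n. p (CY s i q) * p (CX s q l)) * kd kk j
      + 1/2 * kd i l * (\<Sum>q<n. p (CX s kk q) * p (CY s q j))))" for r
  define S2 where "S2 r = (\<Sum>i<n. \<Sum>j<n. ypred_blk m n k p r j i * (p (CX s i l) * p (CY (cp m s) kk j)))" for r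
  define S3 where "S3 r = (\<Sum>i<n. \<Sum>j<n. ypred_blk m n k p r j i * (p (CY (cs m s) i l) * p (CX s kk j)))" for r
  have inner: "(\<Sum>i<n. \<Sum>j<n. ypred_blk m n k p r j i * qpb m n p (CY r i j) (CX s kk l))
      = - (kd r s * S1 r) + 1/2 * (kd r (cp m s) * S2 r) - 1/2 * (kd r (cs m s) * S3 r)" for r
  proof -
    have "- (kd r s * S1 r) + 1/2 * (kd r (cp m s) * S2 r) - 1/2 * (kd r (cs m s) * S3 r)
      = (\<Sum>i<n. \<Sum>j<n. - (kd r s * (ypred_blk m n k p r j i * (kd i l * kd kk j
      + 1/2 * (\<Sum>q<n. p (CY s i q) * p (CX s q l)) * kd kk j
      + 1/2 * kd i l * (\<Sum>q<n. p (CX s kk q) * p (CY s q j)))))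
      + 1/2 * (kd r (cp m s) * (ypred_blk m n k p r j i * (p (CX s i l) * p (CY (cp m s) kk j))))
      - 1/2 * (kd r (cs m s) * (ypred_blk m n k p r j i * (p (CY (cs m s) i l) * p (CX s kk j)))))"
      unfolding S1_def S2_def S3_def
      by (simp only: sum.distrib sum_subtractf sum_negf sum_distrib_left)
    also have "\<dots> = (\<Sum>i<n. \<Sum>j<n. ypred_blk m n k p r j i * qpb m n p (CY r i j) (CX s kk l))"
      unfolding bracket by (intro sum.cong refl) (simp add: algebra_simps)
    finally show ?thesis ..
  qed
  have "(\<Sum>r<m. \<Sum>i<n. \<Sum>j<n. ypred_blk m n k p r j i * qpb m n p (CY r i j) (CX s kk l))
      = (\<Sum>r<m. - (kd r s * S1 r) + 1/2 * (kd r (cp m s) * S2 r) - 1/2 * (kd r (cs m s) * S3 r))"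
    by (simp only: inner)
  also have "\<dots> = - (\<Sum>r<m. kd r s * S1 r) + 1/2 * (\<Sum>r<m. kd r (cp m s) * S2 r) - 1/2 * (\<Sum>r<m. kd r (cs m s) * S3 r)"
    by (simp only: sum.distrib sum_subtractf sum_negf sum_distrib_left)
  also have "\<dots> = - S1 s + 1/2 * S2 (cp m s) - 1/2 * S3 (cs m s)"
    by (simp only: sum_kd(1)[OF s] sum_kd(1)[OF cps] sum_kd(1)[OF css])
  also have "S1 s = ypred_blk m n k p s kk l + 1/2 * (\<Sum>q<n. ydiag_blk m n k p s kk q * p (CX s q l))
      + 1/2 * (\<Sum>q<n. p (CX s kk q) * ydiag_blk m n k p (cs m s) q l)"
    unfolding S1_def by (rule ypred_blk_contract_diag_bracket[OF s kk l])
  also have "S2 (cp m s) = (\<Sum>i<n. ydiag_blk m n k p s kk i * p (CX s i l))"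
  proof -
    have "S2 (cp m s) = (\<Sum>i<n. (\<Sum>j<n. p (CY (cp m s) kk j) * ypred_blk m n k p (cp m s) j i) * p (CX s i l))"
      unfolding S2_def sum_distrib_right by (intro sum.cong refl) (simp add: mult_ac)
    also have "\<dots> = (\<Sum>i<n. ydiag_blk m n k p (cs m (cp m s)) kk i * p (CX s i l))"
      using Y_mult_ypred_blk[OF m1 k1 cps kk] by simp
    finally show ?thesis using cs_cp[OF m1 s] by simp
  qed
  also have "S3 (cs m s) = (\<Sum>j<n. p (CX s kk j) * ydiag_blk m n k p (cs m s) j l)"
  proof -
    have "S3 (cs m s) = (\<Sum>j<n. p (CX s kk j) * (\<Sum>i<n. ypred_blk m n k p (cs m s) j i * p (CY (cs m s) i l)))"
      unfolding S3_def sum_distrib_left by (subst sum.swap) (intro sum.cong refl, simp add: mult_ac)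
    also have "\<dots> = (\<Sum>j<n. p (CX s kk j) * ydiag_blk m n k p (cs m s) j l)"
      using ypred_blk_mult_Y[OF m1 k1 css _ l] by simp
    finally show ?thesis .
  qed
  finally have "(\<Sum>r<m. \<Sum>i<n. \<Sum>j<n. ypred_blk m n k p r j i * qpb m n p (CY r i j) (CX s kk l))
      = - ypred_blk m n k p s kk l - (\<Sum>j<n. p (CX s kk j) * ydiag_blk m n k p (cs m s) j l)"
    by (simp add: algebra_simps)
  then show ?thesis using xvelocity_block_entry[OF m1 k1 s kk l] by simp
qed

text \<open>In the remaining three sums the two surviving terms cancel: for \<open>Y\<close> because \<open>Y\<^sup>k\<close> commutes
  with \<open>Y\<close>, for \<open>V\<close> and \<open>W\<close> because both are contractions with the same diagonal block of \<open>Y\<^sup>k\<close>.\<close>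

lemma hamvf_sum_CY:
  assumes s: "s < m" and kk: "kk < n" and l: "l < n"
  shows "(\<Sum>r<m. \<Sum>i<n. \<Sum>j<n. ypred_blk m n k p r j i * qpb m n p (CY r i j) (CY s kk l)) = 0"
proof -
  have cps: "cp m s < m" and css: "cs m s < m" using cp_less cs_less m1 by auto
  have bracket: "qpb m n p (CY r i j) (CY s kk l) =
      1/2 * kd s (cp m r) * kd kk j * (\<Sum>q<n. p (CY r i q) * p (CY (cp m r) q l))
      - 1/2 * kd s (cs m r) * (\<Sum>q<n. p (CY (cs m r) kk q) * p (CY r q j)) * kd i l" for r i j
    by (simp add: qpb_def)
  define S1 where "S1 r = (\<Sum>i<n. \<Sum>j<n. (ypred_blk m n k p r j i * (\<Sum>q<n. p (CY r i q) * p (CY (cp m r) q l))) * kd kk j)" for r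
  define S2 where "S2 r = (\<Sum>i<n. \<Sum>j<n. (ypred_blk m n k p r j i * (\<Sum>q<n. p (CY (cs m r) kk q) * p (CY r q j))) * kd i l)" for r
  have inner: "(\<Sum>i<n. \<Sum>j<n. ypred_blk m n k p r j i * qpb m n p (CY r i j) (CY s kk l))
      = 1/2 * (kd s (cp m r) * S1 r) - 1/2 * (kd s (cs m r) * S2 r)" for r
  proof -
    have "1/2 * (kd s (cp m r) * S1 r) - 1/2 * (kd s (cs m r) * S2 r)
      = (\<Sum>i<n. \<Sum>j<n. 1/2 * (kd s (cp m r) * ((ypred_blk m n k p r j i * (\<Sum>q<n. p (CY r i q) * p (CY (cp m r) q l))) * kd kk j))
          - 1/2 * (kd s (cs m r) * ((ypred_blk m n k p r j i * (\<Sum>q<n. p (CY (cs m r) kk q) * p (CY r q j))) * kd i l)))"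
      unfolding S1_def S2_def
      by (simp only: sum.distrib sum_subtractf sum_negf sum_distrib_left)
    also have "\<dots> = (\<Sum>i<n. \<Sum>j<n. ypred_blk m n k p r j i * qpb m n p (CY r i j) (CY s kk l))"
      unfolding bracket by (intro sum.cong refl) (simp add: algebra_simps)
    finally show ?thesis ..
  qed
  have "(\<Sum>r<m. \<Sum>i<n. \<Sum>j<n. ypred_blk m n k p r j i * qpb m n p (CY r i j) (CY s kk l))
      = (\<Sum>r<m. 1/2 * (kd s (cp m r) * S1 r) - 1/2 * (kd s (cs m r) * S2 r))"
    by (simp only: inner)
  also have "\<dots> = 1/2 * (\<Sum>r<m. kd s (cp m r) * S1 r) - 1/2 * (\<Sum>r<m. kd s (cs m r) * S2 r)"
    by (simp only: sum.distrib sum_subtractf sum_negf sum_distrib_left)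
  also have "\<dots> = 1/2 * S1 (cs m s) - 1/2 * S2 (cp m s)"
    by (simp only: sum_kd_cp[OF m1 s] sum_kd_cs[OF m1 s])
  also have "S1 (cs m s) = (\<Sum>q<n. ydiag_blk m n k p (cs m s) kk q * p (CY s q l))"
  proof -
    have "S1 (cs m s) = (\<Sum>i<n. ypred_blk m n k p (cs m s) kk i * (\<Sum>q<n. p (CY (cs m s) i q) * p (CY s q l)))"
      unfolding S1_def sum_sum_kd_right[OF kk] cp_cs[OF m1 s] ..
    also have "\<dots> = (\<Sum>q<n. (\<Sum>i<n. ypred_blk m n k p (cs m s) kk i * p (CY (cs m s) i q)) * p (CY s q l))"
      by (simp only: sum_mult_sum_swap_left)
    also have "\<dots> = (\<Sum>q<n. ydiag_blk m n k p (cs m s) kk q * p (CY s q l))"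
      using ypred_blk_mult_Y[OF m1 k1 css kk] by simp
    finally show ?thesis .
  qed
  also have "S2 (cp m s) = (\<Sum>q<n. p (CY s kk q) * ydiag_blk m n k p s q l)"
  proof -
    have "S2 (cp m s) = (\<Sum>j<n. ypred_blk m n k p (cp m s) j l * (\<Sum>q<n. p (CY s kk q) * p (CY (cp m s) q j)))"
      unfolding S2_def sum_sum_kd_left[OF l] cs_cp[OF m1 s] ..
    also have "\<dots> = (\<Sum>q<n. p (CY s kk q) * (\<Sum>j<n. p (CY (cp m s) q j) * ypred_blk m n k p (cp m s) j l))"
      by (simp only: sum_mult_sum_swap_right)
    also have "\<dots> = (\<Sum>q<n. p (CY s kk q) * ydiag_blk m n k p (cs m (cp m s)) q l)"
      using Y_mult_ypred_blk[OF m1 k1 cps _ l] by simp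
    finally show ?thesis using cs_cp[OF m1 s] by simp
  qed
  finally show ?thesis using ydiag_blk_commute_Y[OF m1 k1 s kk l] by simp
qed

lemma hamvf_sum_CV:
  assumes s: "s < m" and l: "l < n"
  shows "(\<Sum>r<m. \<Sum>i<n. \<Sum>j<n. ypred_blk m n k p r j i * qpb m n p (CY r i j) (CV s a l)) = 0"
proof -
  have cps: "cp m s < m" and css: "cs m s < m" using cp_less cs_less m1 by auto
  have bracket: "qpb m n p (CY r i j) (CV s a l) =
      1/2 * kd s (cs m r) * (\<Sum>q<n. p (CV (cs m r) a q) * p (CY r q j)) * kd i l
      - 1/2 * kd r s * p (CV r a j) * p (CY r i l)" for r i j
    by (simp add: qpb_def)
  define S1 where "S1 r = (\<Sum>i<n. \<Sum>j<n. (ypred_blk m n k p r j i * (\<Sum>q<n. p (CV (cs m r) a q) * p (CY r q j))) * kd i l)" for r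
  define S2 where "S2 r = (\<Sum>i<n. \<Sum>j<n. ypred_blk m n k p r j i * (p (CV r a j) * p (CY r i l)))" for r
  have inner: "(\<Sum>i<n. \<Sum>j<n. ypred_blk m n k p r j i * qpb m n p (CY r i j) (CV s a l))
      = 1/2 * (kd s (cs m r) * S1 r) - 1/2 * (kd r s * S2 r)" for r
  proof -
    have "1/2 * (kd s (cs m r) * S1 r) - 1/2 * (kd r s * S2 r)
      = (\<Sum>i<n. \<Sum>j<n. 1/2 * (kd s (cs m r) * ((ypred_blk m n k p r j i * (\<Sum>q<n. p (CV (cs m r) a q) * p (CY r q j))) * kd i l))
          - 1/2 * (kd r s * (ypred_blk m n k p r j i * (p (CV r a j) * p (CY r i l)))))"
      unfolding S1_def S2_def
      by (simp only: sum.distrib sum_subtractf sum_negf sum_distrib_left)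
    also have "\<dots> = (\<Sum>i<n. \<Sum>j<n. ypred_blk m n k p r j i * qpb m n p (CY r i j) (CV s a l))"
      unfolding bracket by (intro sum.cong refl) (simp add: algebra_simps)
    finally show ?thesis ..
  qed
  have "(\<Sum>r<m. \<Sum>i<n. \<Sum>j<n. ypred_blk m n k p r j i * qpb m n p (CY r i j) (CV s a l))
      = (\<Sum>r<m. 1/2 * (kd s (cs m r) * S1 r) - 1/2 * (kd r s * S2 r))"
    by (simp only: inner)
  also have "\<dots> = 1/2 * (\<Sum>r<m. kd s (cs m r) * S1 r) - 1/2 * (\<Sum>r<m. kd r s * S2 r)"
    by (simp only: sum.distrib sum_subtractf sum_negf sum_distrib_left)
  also have "\<dots> = 1/2 * S1 (cp m s) - 1/2 * S2 s"
    by (simp only: sum_kd_cs[OF m1 s] sum_kd(1)[OF s])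
  also have "S1 (cp m s) = (\<Sum>q<n. p (CV s a q) * ydiag_blk m n k p s q l)"
  proof -
    have "S1 (cp m s) = (\<Sum>j<n. ypred_blk m n k p (cp m s) j l * (\<Sum>q<n. p (CV s a q) * p (CY (cp m s) q j)))"
      unfolding S1_def sum_sum_kd_left[OF l] cs_cp[OF m1 s] ..
    also have "\<dots> = (\<Sum>q<n. p (CV s a q) * (\<Sum>j<n. p (CY (cp m s) q j) * ypred_blk m n k p (cp m s) j l))"
      by (simp only: sum_mult_sum_swap_right)
    also have "\<dots> = (\<Sum>q<n. p (CV s a q) * ydiag_blk m n k p (cs m (cp m s)) q l)"
      using Y_mult_ypred_blk[OF m1 k1 cps _ l] by simp
    finally show ?thesis using cs_cp[OF m1 s] by simp
  qed
  also have "S2 s = (\<Sum>j<n. p (CV s a j) * ydiag_blk m n k p s j l)"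
  proof -
    have "S2 s = (\<Sum>j<n. p (CV s a j) * (\<Sum>i<n. ypred_blk m n k p s j i * p (CY s i l)))"
      unfolding S2_def sum_distrib_left by (subst sum.swap) (intro sum.cong refl, simp add: mult_ac)
    also have "\<dots> = (\<Sum>j<n. p (CV s a j) * ydiag_blk m n k p s j l)"
      using ypred_blk_mult_Y[OF m1 k1 s _ l] by simp
    finally show ?thesis .
  qed
  finally show ?thesis by simp
qed

lemma hamvf_sum_CW:
  assumes s: "s < m" and kk: "kk < n"
  shows "(\<Sum>r<m. \<Sum>i<n. \<Sum>j<n. ypred_blk m n k p r j i * qpb m n p (CY r i j) (CW s a kk)) = 0"
proof -
  have cps: "cp m s < m" and css: "cs m s < m" using cp_less cs_less m1 by auto
  have bracket: "qpb m n p (CY r i j) (CW s a kk) =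
      1/2 * kd r s * kd kk j * (\<Sum>q<n. p (CY r i q) * p (CW r a q))
      - 1/2 * kd s (cs m r) * p (CY r kk j) * p (CW (cs m r) a i)" for r i j
    by (simp add: qpb_def)
  define S1 where "S1 r = (\<Sum>i<n. \<Sum>j<n. (ypred_blk m n k p r j i * (\<Sum>q<n. p (CY r i q) * p (CW r a q))) * kd kk j)" for r
  define S2 where "S2 r = (\<Sum>i<n. \<Sum>j<n. ypred_blk m n k p r j i * (p (CY r kk j) * p (CW (cs m r) a i)))" for r
  have inner: "(\<Sum>i<n. \<Sum>j<n. ypred_blk m n k p r j i * qpb m n p (CY r i j) (CW s a kk))
      = 1/2 * (kd r s * S1 r) - 1/2 * (kd s (cs m r) * S2 r)" for r
  proof -
    have "1/2 * (kd r s * S1 r) - 1/2 * (kd s (cs m r) * S2 r)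
      = (\<Sum>i<n. \<Sum>j<n. 1/2 * (kd r s * ((ypred_blk m n k p r j i * (\<Sum>q<n. p (CY r i q) * p (CW r a q))) * kd kk j))
          - 1/2 * (kd s (cs m r) * (ypred_blk m n k p r j i * (p (CY r kk j) * p (CW (cs m r) a i)))))"
      unfolding S1_def S2_def
      by (simp only: sum.distrib sum_subtractf sum_negf sum_distrib_left)
    also have "\<dots> = (\<Sum>i<n. \<Sum>j<n. ypred_blk m n k p r j i * qpb m n p (CY r i j) (CW s a kk))"
      unfolding bracket by (intro sum.cong refl) (simp add: algebra_simps)
    finally show ?thesis ..
  qed
  have "(\<Sum>r<m. \<Sum>i<n. \<Sum>j<n. ypred_blk m n k p r j i * qpb m n p (CY r i j) (CW s a kk))
      = (\<Sum>r<m. 1/2 * (kd r s * S1 r) - 1/2 * (kd s (cs m r) * S2 r))"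
    by (simp only: inner)
  also have "\<dots> = 1/2 * (\<Sum>r<m. kd r s * S1 r) - 1/2 * (\<Sum>r<m. kd s (cs m r) * S2 r)"
    by (simp only: sum.distrib sum_subtractf sum_negf sum_distrib_left)
  also have "\<dots> = 1/2 * S1 s - 1/2 * S2 (cp m s)"
    by (simp only: sum_kd_cs[OF m1 s] sum_kd(1)[OF s])
  also have "S1 s = (\<Sum>q<n. ydiag_blk m n k p s kk q * p (CW s a q))"
  proof -
    have "S1 s = (\<Sum>i<n. ypred_blk m n k p s kk i * (\<Sum>q<n. p (CY s i q) * p (CW s a q)))"
      unfolding S1_def sum_sum_kd_right[OF kk] ..
    also have "\<dots> = (\<Sum>q<n. (\<Sum>i<n. ypred_blk m n k p s kk i * p (CY s i q)) * p (CW s a q))"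
      by (simp only: sum_mult_sum_swap_left)
    also have "\<dots> = (\<Sum>q<n. ydiag_blk m n k p s kk q * p (CW s a q))"
      using ypred_blk_mult_Y[OF m1 k1 s kk] by simp
    finally show ?thesis .
  qed
  also have "S2 (cp m s) = (\<Sum>i<n. ydiag_blk m n k p s kk i * p (CW s a i))"
  proof -
    have "S2 (cp m s) = (\<Sum>i<n. (\<Sum>j<n. p (CY (cp m s) kk j) * ypred_blk m n k p (cp m s) j i) * p (CW s a i))"
      unfolding S2_def sum_distrib_right cs_cp[OF m1 s] by (intro sum.cong refl) (simp add: mult_ac)
    also have "\<dots> = (\<Sum>i<n. ydiag_blk m n k p (cs m (cp m s)) kk i * p (CW s a i))"
      using Y_mult_ypred_blk[OF m1 k1 cps kk] by simp
    finally show ?thesis using cs_cp[OF m1 s] by simp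
  qed
  finally show ?thesis by simp
qed

end

lemma hamvf_trYk:
  assumes m1: "m \<ge> 1" and k1: "k \<ge> 1" and g: "g \<in> coords m n d"
  shows "hamvf m n d (trYk m n k) p g =
          (case g of
             CX r i j \<Rightarrow> (- (bigY m n p ^\<^sub>m (k - 1)) - bigX m n p * bigY m n p ^\<^sub>m k)
                            $$ (r * n + i, cs m r * n + j)
           | _ \<Rightarrow> 0)"
  using g unfolding coords_def hamvf_trYk_eq_sum[OF m1 k1]
  by (auto simp: hamvf_sum_CX[OF m1 k1] hamvf_sum_CY[OF m1 k1] hamvf_sum_CV[OF m1 k1] hamvf_sum_CW[OF m1 k1])

section \<open>Block structure\<close>

definition mat_block :: "nat \<Rightarrow> complex mat \<Rightarrow> nat \<Rightarrow> nat \<Rightarrow> complex mat" where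
  "mat_block n M s s' = mat n n (\<lambda>(i, j). M $$ (s * n + i, s' * n + j))"

lemma mat_block_dim[simp]: "dim_row (mat_block n M s s') = n" "dim_col (mat_block n M s s') = n"
  unfolding mat_block_def by simp_all

lemma mat_block_carrier_mat[simp]: "mat_block n M s s' \<in> carrier_mat n n" unfolding mat_block_def by simp

definition block_diagonal :: "nat \<Rightarrow> nat \<Rightarrow> complex mat \<Rightarrow> bool" where
  "block_diagonal n N D \<longleftrightarrow> (\<forall>a b. a < N \<longrightarrow> b < N \<longrightarrow> a div n \<noteq> b div n \<longrightarrow> D $$ (a, b) = 0)"

lemma mat_block_mult_block_diagonal:
  fixes m n :: nat
  assumes M: "M \<in> carrier_mat (n * m) (n * m)" and D: "D \<in> carrier_mat (n * m) (n * m)"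
    and dD: "block_diagonal n (n * m) D" and s: "s < m" and s': "s' < m"
  shows "mat_block n (M * D) s' s = mat_block n M s' s * mat_block n D s s"
proof (rule eq_matI)
  fix i l assume "i < dim_row (mat_block n M s' s * mat_block n D s s)" "l < dim_col (mat_block n M s' s * mat_block n D s s)"
  then have il: "i < n" "l < n" by auto
  have a: "s' * n + i < n * m" "s * n + l < n * m" using block_index_less s s' il by auto
  have "mat_block n (M * D) s' s $$ (i, l) = (M * D) $$ (s' * n + i, s * n + l)" unfolding mat_block_def using il by simp
  also have "\<dots> = (\<Sum>c<n * m. M $$ (s' * n + i, c) * D $$ (c, s * n + l))"
    by (rule index_mult_mat_sum) (use M D a in auto)
  also have "\<dots> = (\<Sum>j<n. M $$ (s' * n + i, s * n + j) * D $$ (s * n + j, s * n + l))"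
    by (rule sum_block_support[OF s]) (use dD a il in \<open>auto simp: block_diagonal_def\<close>)
  also have "\<dots> = (mat_block n M s' s * mat_block n D s s) $$ (i, l)"
    using il by (simp add: index_mult_mat_sum[of _ n n _ n] mat_block_def del: index_mult_mat)
  finally show "mat_block n (M * D) s' s $$ (i, l) = (mat_block n M s' s * mat_block n D s s) $$ (i, l)" .
qed auto

lemma mat_block_one:
  assumes "s < m" shows "mat_block n (1\<^sub>m (n * m)) s s = 1\<^sub>m n"
  by (rule eq_matI) (use block_index_less[OF assms] in \<open>auto simp: mat_block_def\<close>)

lemma mat_block_add:
  assumes "A \<in> carrier_mat (n * m) (n * m)" "B \<in> carrier_mat (n * m) (n * m)" "s < m" "s' < m"
  shows "mat_block n (A + B) s s' = mat_block n A s s' + mat_block n B s s'"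
  by (rule eq_matI) (use assms block_index_less[OF assms(3)] block_index_less[OF assms(4)] in \<open>auto simp: mat_block_def\<close>)

context
  fixes m n :: nat
  assumes m1: "m \<ge> 1"
begin

lemma Xm_mult_Ym_eq_block:
  assumes s: "s < m"
  shows "Xm n q s * Ym n q' s = mat_block n (bigX m n q * bigY m n q') s s"
proof (rule eq_matI)
  fix i l assume "i < dim_row (mat_block n (bigX m n q * bigY m n q') s s)"
    "l < dim_col (mat_block n (bigX m n q * bigY m n q') s s)"
  then have il: "i < n" "l < n" by auto
  show "(Xm n q s * Ym n q' s) $$ (i, l) = mat_block n (bigX m n q * bigY m n q') s s $$ (i, l)"
    using bigX_mult_entry[OF m1 bigY_carrier_mat block_index_less[OF s il(2)] s il(1)]
      bigY_block_entry[OF m1 s _ il(2)] il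
    by (simp add: index_mult_mat_sum[of _ n n _ n] mat_block_def Xm_def Ym_def del: index_mult_mat)
qed (auto simp: Xm_def Ym_def)

lemma Ym_mult_Xm_eq_block:
  assumes s: "s < m"
  shows "Ym n q s * Xm n q' s = mat_block n (bigY m n q * bigX m n q') (cs m s) (cs m s)"
proof (rule eq_matI)
  fix i l assume "i < dim_row (mat_block n (bigY m n q * bigX m n q') (cs m s) (cs m s))"
    "l < dim_col (mat_block n (bigY m n q * bigX m n q') (cs m s) (cs m s))"
  then have il: "i < n" "l < n" by auto
  show "(Ym n q s * Xm n q' s) $$ (i, l) = mat_block n (bigY m n q * bigX m n q') (cs m s) (cs m s) $$ (i, l)"
    using bigY_mult_entry[OF m1 bigX_carrier_mat block_index_less[OF cs_less[OF m1] il(2)] s il(1)]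
      bigX_block_entry[OF m1 s _ il(2)] il
    by (simp add: index_mult_mat_sum[of _ n n _ n] mat_block_def Xm_def Ym_def del: index_mult_mat)
qed (auto simp: Xm_def Ym_def)

lemma one_plus_Xm_Ym_eq_block:
  assumes s: "s < m"
  shows "1\<^sub>m n + Xm n q s * Ym n q s = mat_block n (1\<^sub>m (n * m) + bigX m n q * bigY m n q) s s"
  using Xm_mult_Ym_eq_block[OF s, of q q] mat_block_one[OF s, of n]
    mat_block_add[of "1\<^sub>m (n * m)" n m "bigX m n q * bigY m n q" s s] s
    mult_carrier_mat[OF bigX_carrier_mat[of m n q] bigY_carrier_mat[of m n q]] by simp

lemma one_plus_Ym_Xm_eq_block:
  assumes s: "s < m"
  shows "1\<^sub>m n + Ym n q s * Xm n q s
    = mat_block n (1\<^sub>m (n * m) + bigY m n q * bigX m n q) (cs m s) (cs m s)"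
  using Ym_mult_Xm_eq_block[OF s, of q q] mat_block_one[OF cs_less[OF m1], of n]
    mat_block_add[of "1\<^sub>m (n * m)" n m "bigY m n q * bigX m n q" "cs m s" "cs m s"] cs_less[OF m1]
    mult_carrier_mat[OF bigY_carrier_mat[of m n q] bigX_carrier_mat[of m n q]] by simp

lemma bigY_pow_entry_nonzero:
  assumes "a < n * m" "b < n * m" "(bigY m n q ^\<^sub>m j) $$ (a, b) \<noteq> 0"
  shows "a div n = (b div n + j) mod m"
  using assms
proof (induction j arbitrary: b)
  case 0
  then have "a = b" by (cases "a = b") auto
  then show ?case using block_div_less[OF 0(2)] by simp
next
  case (Suc j)
  have "(bigY m n q ^\<^sub>m Suc j) $$ (a, b) = (\<Sum>c<n * m. (bigY m n q ^\<^sub>m j) $$ (a, c) * bigY m n q $$ (c, b))"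
    by (simp only: pow_mat.simps) (rule index_mult_mat_sum, use Suc.prems in auto)
  then obtain c where c: "c < n * m" "(bigY m n q ^\<^sub>m j) $$ (a, c) \<noteq> 0" "bigY m n q $$ (c, b) \<noteq> 0"
    using Suc.prems(3) by (metis (no_types, lifting) lessThan_iff mult_not_zero sum.neutral)
  have "c div n = cs m (b div n)" using bigY_entry_eq_0[OF c(1) Suc.prems(2)] c(3) by blast
  moreover have "a div n = (c div n + j) mod m" by (rule Suc.IH[OF Suc.prems(1) c(1) c(2)])
  ultimately show ?case unfolding cs_def by (simp add: mod_add_left_eq)
qed

lemma bigY_pow_off_diag_block:
  assumes "k mod m = 0" "a < n * m" "b < n * m" "a div n \<noteq> b div n"
  shows "(bigY m n q ^\<^sub>m (k * j)) $$ (a, b) = 0"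
proof (rule ccontr)
  assume "(bigY m n q ^\<^sub>m (k * j)) $$ (a, b) \<noteq> 0"
  from bigY_pow_entry_nonzero[OF assms(2,3) this] have "a div n = (b div n + k * j) mod m" .
  also have "\<dots> = b div n"
  proof -
    have "(k * j) mod m = 0" using assms(1) by (metis dvd_mult2 mod_eq_0_iff_dvd)
    then show ?thesis using block_div_less[OF assms(3)] by (metis add.right_neutral mod_add_right_eq mod_less)
  qed
  finally show False using assms(4) by simp
qed

lemma xvelocity_off_block:
  assumes km: "k mod m = 0" and k1: "k \<ge> 1" and ab: "a < n * m" "b < n * m" and nb: "b div n \<noteq> cs m (a div n)"
  shows "(- (bigY m n q ^\<^sub>m (k - 1)) - bigX m n q' * bigY m n q ^\<^sub>m k) $$ (a, b) = 0"
proof -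
  have bm: "b div n < m" by (rule block_div_less[OF ab(2)])
  have P0: "(bigY m n q ^\<^sub>m (k - 1)) $$ (a, b) = 0"
  proof (rule ccontr)
    assume "(bigY m n q ^\<^sub>m (k - 1)) $$ (a, b) \<noteq> 0"
    from bigY_pow_entry_nonzero[OF ab this] have e: "a div n = (b div n + (k - 1)) mod m" .
    have "cs m (a div n) = (b div n + (k - 1) + 1) mod m" unfolding e cs_def by (simp add: mod_Suc_eq)
    also have "\<dots> = (b div n + k) mod m" using k1 by simp
    also have "\<dots> = b div n" using km bm by (metis add.right_neutral mod_add_right_eq mod_less)
    finally show False using nb by simp
  qed
  have XK: "(bigX m n q' * bigY m n q ^\<^sub>m k) $$ (a, b) = 0"
  proof -
    have "(bigX m n q' * bigY m n q ^\<^sub>m k) $$ (a, b) = (\<Sum>c<n * m. bigX m n q' $$ (a, c) * (bigY m n q ^\<^sub>m k) $$ (c, b))"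
      by (rule index_mult_mat_sum) (use ab in auto)
    also have "\<dots> = 0"
    proof (rule sum.neutral, rule ballI)
      fix c assume c: "c \<in> {..<n * m}"
      show "bigX m n q' $$ (a, c) * (bigY m n q ^\<^sub>m k) $$ (c, b) = 0"
      proof (cases "c div n = cs m (a div n)")
        case True
        then have "c div n \<noteq> b div n" using nb by simp
        then have "(bigY m n q ^\<^sub>m (k * 1)) $$ (c, b) = 0" using bigY_pow_off_diag_block[OF km _ ab(2), of c q 1] c by auto
        then show ?thesis by simp
      next
        case False
        then show ?thesis using bigX_entry_eq_0[OF ab(1), of c q'] c by auto
      qed
    qed
    finally show ?thesis .
  qed
  show ?thesis using P0 XK ab by simp
qed

end

lemma block_diagonal_mexp:
  assumes m1: "m \<ge> 1" and km: "k mod m = 0"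
  shows "block_diagonal n (n * m) (mexp (z \<cdot>\<^sub>m bigY m n q ^\<^sub>m k))"
  unfolding block_diagonal_def
proof (intro allI impI)
  fix a b assume ab: "a < n * m" "b < n * m" and d: "a div n \<noteq> b div n"
  have K: "bigY m n q ^\<^sub>m k \<in> carrier_mat (n * m) (n * m)" by simp
  have "mexp (z \<cdot>\<^sub>m bigY m n q ^\<^sub>m k) $$ (a, b) = (\<Sum>j. exp_coeff (bigY m n q ^\<^sub>m k) a b j * z ^ j)"
    by (rule mexp_entry[OF K ab])
  also have "\<dots> = (\<Sum>j. 0)"
  proof (rule suminf_cong)
    fix j
    have "((bigY m n q ^\<^sub>m k) ^\<^sub>m j) $$ (a, b) = 0"
      unfolding pow_mat_mult[OF bigY_carrier_mat] by (rule bigY_pow_off_diag_block[OF m1 km ab d])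
    then show "exp_coeff (bigY m n q ^\<^sub>m k) a b j * z ^ j = 0" by (simp add: exp_coeff_def)
  qed
  finally show "mexp (z \<cdot>\<^sub>m bigY m n q ^\<^sub>m k) $$ (a, b) = 0" by simp
qed

lemma invertible_mat_block_mexp:
  assumes m1: "m \<ge> 1" and km: "k mod m = 0" and s: "s < m"
  shows "invertible_mat (mat_block n (mexp ((- of_real t) \<cdot>\<^sub>m bigY m n q ^\<^sub>m k)) s s)"
proof -
  have K: "bigY m n q ^\<^sub>m k \<in> carrier_mat (n * m) (n * m)" by simp
  let ?E = "mexp ((- of_real t) \<cdot>\<^sub>m bigY m n q ^\<^sub>m k)" and ?F = "mexp (of_real t \<cdot>\<^sub>m bigY m n q ^\<^sub>m k)"
  have E: "?E \<in> carrier_mat (n * m) (n * m)" and F: "?F \<in> carrier_mat (n * m) (n * m)" by simp_all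
  have "mat_block n (?E * ?F) s s = mat_block n ?E s s * mat_block n ?F s s"
    by (rule mat_block_mult_block_diagonal[where m = m]) (use E F block_diagonal_mexp[OF m1 km] s in auto)
  then have 1: "mat_block n ?E s s * mat_block n ?F s s = 1\<^sub>m n"
    using mexp_uminus_mult_mexp[OF K, of t] mat_block_one[OF s, of n] by simp
  have "mat_block n (?F * ?E) s s = mat_block n ?F s s * mat_block n ?E s s"
    by (rule mat_block_mult_block_diagonal[where m = m]) (use E F block_diagonal_mexp[OF m1 km] s in auto)
  then have 2: "mat_block n ?F s s * mat_block n ?E s s = 1\<^sub>m n"
    using mexp_mult_mexp_uminus[OF K, of t] mat_block_one[OF s, of n] by simp
  show ?thesis by (rule invertible_matI[OF _ _ 1 2]) simp_all
qed

section \<open>The flow\<close>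

definition integral_curve ::
    "nat \<Rightarrow> nat \<Rightarrow> (nat \<Rightarrow> nat) \<Rightarrow> (point \<Rightarrow> complex) \<Rightarrow> point \<Rightarrow> (real \<Rightarrow> point) \<Rightarrow> bool" where
  "integral_curve m n d F p0 c \<longleftrightarrow>
     (\<forall>g\<in>coords m n d. c 0 g = p0 g) \<and>
     (\<forall>t. \<forall>g\<in>coords m n d. ((\<lambda>s. c s g) has_vector_derivative hamvf m n d F (c t) g) (at t))"

definition explicit_flow :: "nat \<Rightarrow> nat \<Rightarrow> (nat \<Rightarrow> nat) \<Rightarrow> nat \<Rightarrow> point \<Rightarrow> (real \<Rightarrow> point) \<Rightarrow> bool" where
  "explicit_flow m n d k p0 c \<longleftrightarrow> (\<forall>t.
     bigX m n (c t) = xflow k t (bigX m n p0) (bigY m n p0) \<and>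
     bigY m n (c t) = bigY m n p0 \<and>
     (\<forall>s a j. CV s a j \<in> coords m n d \<longrightarrow> c t (CV s a j) = p0 (CV s a j)) \<and>
     (\<forall>s a j. CW s a j \<in> coords m n d \<longrightarrow> c t (CW s a j) = p0 (CW s a j)))"

context
  fixes m n k :: nat and d :: "nat \<Rightarrow> nat" and p0 :: point
  assumes m1: "m \<ge> 1" and k1: "k \<ge> 1" and km: "k mod m = 0"
begin

lemma integral_curve_const:
  assumes c: "integral_curve m n d (trYk m n k) p0 c"
    and g: "g \<in> coords m n d" and not_CX: "\<And>r i j. g \<noteq> CX r i j"
  shows "c t g = p0 g"
proof -
  have "((\<lambda>s. c s g) has_vector_derivative 0) (at t')" for t'
  proof -
    have "hamvf m n d (trYk m n k) (c t') g = 0"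
      using hamvf_trYk[OF m1 k1 g, of "c t'"] not_CX by (cases g) auto
    then show ?thesis using c g unfolding integral_curve_def by metis
  qed
  then have "c t g = c 0 g" by (rule has_vector_derivative_zero_imp_const)
  then show ?thesis using c g unfolding integral_curve_def by simp
qed

lemma integral_curve_bigY:
  assumes "integral_curve m n d (trYk m n k) p0 c"
  shows "bigY m n (c t) = bigY m n p0"
  by (rule bigY_cong) (rule integral_curve_const[OF assms], auto)

lemma integral_curve_bigX_has_vector_derivative:
  assumes c: "integral_curve m n d (trYk m n k) p0 c" and ab: "a < n * m" "b < n * m"
  shows "((\<lambda>s. bigX m n (c s) $$ (a, b)) has_vector_derivative
    (- (bigY m n p0 ^\<^sub>m (k - 1)) - bigX m n (c t) * bigY m n p0 ^\<^sub>m k) $$ (a, b)) (at t)"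
proof (cases "b div n = cs m (a div n)")
  case True
  define r i j where "r = a div n" and "i = a mod n" and "j = b mod n"
  have rij: "r < m" "i < n" "j < n" using block_index_bounds ab unfolding r_def i_def j_def by auto
  have a: "a = r * n + i" and b: "b = cs m r * n + j"
    using True div_mult_mod_eq[of a n] div_mult_mod_eq[of b n] by (simp_all add: r_def i_def j_def)
  have g: "CX r i j \<in> coords m n d" using rij by simp
  have "hamvf m n d (trYk m n k) (c t) (CX r i j)
      = (- (bigY m n p0 ^\<^sub>m (k - 1)) - bigX m n (c t) * bigY m n p0 ^\<^sub>m k) $$ (a, b)"
    using hamvf_trYk[OF m1 k1 g, of "c t"] integral_curve_bigY[OF c] a b by simp
  moreover have "(\<lambda>s. bigX m n (c s) $$ (a, b)) = (\<lambda>s. c s (CX r i j))"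
    unfolding a b using bigX_block_entry[OF m1 rij] by simp
  moreover have "((\<lambda>s. c s (CX r i j)) has_vector_derivative hamvf m n d (trYk m n k) (c t) (CX r i j)) (at t)"
    using c g unfolding integral_curve_def by blast
  ultimately show ?thesis by simp
next
  case False
  then have "(\<lambda>s. bigX m n (c s) $$ (a, b)) = (\<lambda>s. 0)" using bigX_entry_eq_0[OF ab] by simp
  moreover have "(- (bigY m n p0 ^\<^sub>m (k - 1)) - bigX m n (c t) * bigY m n p0 ^\<^sub>m k) $$ (a, b) = 0"
    by (rule xvelocity_off_block[OF m1 km k1 ab False])
  ultimately show ?thesis by simp
qed

lemma integral_curve_imp_explicit_flow:
  assumes c: "integral_curve m n d (trYk m n k) p0 c"
  shows "explicit_flow m n d k p0 c"
proof -
  let ?N = "n * m" and ?X0 = "bigX m n p0" and ?Y0 = "bigY m n p0"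
  have "bigX m n (c t) = xflow k t ?X0 ?Y0" for t
  proof (rule linear_mat_ode_unique[where K = "?Y0 ^\<^sub>m k" and C = "- (?Y0 ^\<^sub>m (k - 1))"])
    show "bigX m n (c 0) = xflow k 0 ?X0 ?Y0"
      using c xflow_zero[of ?X0 ?N ?Y0] by (auto intro!: bigX_cong simp: integral_curve_def)
    show "((\<lambda>s. bigX m n (c s) $$ (a, b)) has_vector_derivative
        (- (?Y0 ^\<^sub>m (k - 1)) - bigX m n (c t) * ?Y0 ^\<^sub>m k) $$ (a, b)) (at t)"
      if "a < ?N" "b < ?N" for t a b
      using integral_curve_bigX_has_vector_derivative[OF c that] .
    show "((\<lambda>s. xflow k s ?X0 ?Y0 $$ (a, b)) has_vector_derivative
        (- (?Y0 ^\<^sub>m (k - 1)) - xflow k t ?X0 ?Y0 * ?Y0 ^\<^sub>m k) $$ (a, b)) (at t)"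
      if "a < ?N" "b < ?N" for t a b
      by (rule xflow_has_vector_derivative[OF _ _ k1 that]) simp_all
  qed simp_all
  then show ?thesis
    unfolding explicit_flow_def using integral_curve_bigY[OF c] integral_curve_const[OF c] by auto
qed

lemma explicit_flow_imp_integral_curve:
  assumes c: "explicit_flow m n d k p0 c"
  shows "integral_curve m n d (trYk m n k) p0 c"
proof -
  let ?N = "n * m" and ?X0 = "bigX m n p0" and ?Y0 = "bigY m n p0"
  have cX: "c t (CX r i j) = xflow k t ?X0 ?Y0 $$ (r * n + i, cs m r * n + j)"
    if "r < m" "i < n" "j < n" for t r i j
    using bigX_block_entry[OF m1 that, of "c t"] c unfolding explicit_flow_def by simp
  have cY: "c t (CY r i j) = p0 (CY r i j)" if "r < m" "i < n" "j < n" for t r i j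
    using bigY_block_entry[OF m1 that, of "c t"] bigY_block_entry[OF m1 that, of p0] c
    unfolding explicit_flow_def by simp
  have const: "c t g = p0 g" if "g \<in> coords m n d" "\<And>r i j. g \<noteq> CX r i j" for t g
    using that cY c unfolding explicit_flow_def by (cases g) auto
  have "c 0 g = p0 g" if g: "g \<in> coords m n d" for g
  proof (cases "\<exists>r i j. g = CX r i j")
    case True
    then obtain r i j where rij: "g = CX r i j" "r < m" "i < n" "j < n" using g by auto
    then show ?thesis using cX[of r i j 0] xflow_zero[of ?X0 ?N ?Y0] bigX_block_entry[OF m1 rij(2-4)] by simp
  qed (use const g in blast)
  moreover have "((\<lambda>s. c s g) has_vector_derivative hamvf m n d (trYk m n k) (c t) g) (at t)"
    if g: "g \<in> coords m n d" for t g
  proof (cases "\<exists>r i j. g = CX r i j")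
    case True
    then obtain r i j where rij: "g = CX r i j" "r < m" "i < n" "j < n" using g by auto
    have ab: "r * n + i < ?N" "cs m r * n + j < ?N" using block_index_less rij cs_less[OF m1] by auto
    have "hamvf m n d (trYk m n k) (c t) g
        = (- (?Y0 ^\<^sub>m (k - 1)) - xflow k t ?X0 ?Y0 * ?Y0 ^\<^sub>m k) $$ (r * n + i, cs m r * n + j)"
      using hamvf_trYk[OF m1 k1 g, of "c t"] rij c unfolding explicit_flow_def by simp
    then show ?thesis using xflow_has_vector_derivative[OF _ _ k1 ab, of ?X0 ?Y0 t] cX rij(2-4) rij(1) by simp
  next
    case False
    then have "(\<lambda>s. c s g) = (\<lambda>s. p0 g)" and "hamvf m n d (trYk m n k) (c t) g = 0"
      using const[OF g] hamvf_trYk[OF m1 k1 g, of "c t"] by (auto split: coord.split)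
    then show ?thesis by simp
  qed
  ultimately show ?thesis unfolding integral_curve_def by blast
qed

end

lemma explicit_flow_in_Mbullet:
  assumes m1: "m \<ge> 1" and k1: "k \<ge> 1" and km: "k mod m = 0"
    and p0: "p0 \<in> Mbullet m n d" and c: "explicit_flow m n d k p0 c"
  shows "c t \<in> Mbullet m n d"
  unfolding Mbullet_def mem_Collect_eq
proof (intro allI impI conjI)
  let ?N = "n * m" and ?X0 = "bigX m n p0" and ?Y0 = "bigY m n p0"
  let ?E = "mexp ((- of_real t) \<cdot>\<^sub>m ?Y0 ^\<^sub>m k)"
  have X0: "?X0 \<in> carrier_mat ?N ?N" and Y0: "?Y0 \<in> carrier_mat ?N ?N" and E: "?E \<in> carrier_mat ?N ?N"
    by simp_all
  have Xt: "bigX m n (c t) = xflow k t ?X0 ?Y0" and Yt: "bigY m n (c t) = ?Y0"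
    using c unfolding explicit_flow_def by simp_all
  fix s assume s: "s < m"
  have css: "cs m s < m" by (rule cs_less[OF m1])
  have block_E: "mat_block n (A * ?E) r r = mat_block n A r r * mat_block n ?E r r"
    if "A \<in> carrier_mat ?N ?N" "r < m" for A r
    by (rule mat_block_mult_block_diagonal[where m = m]) (use that E block_diagonal_mexp[OF m1 km] in auto)
  have "1\<^sub>m n + Xm n (c t) s * Ym n (c t) s = mat_block n ((1\<^sub>m ?N + ?X0 * ?Y0) * ?E) s s"
    unfolding one_plus_Xm_Ym_eq_block[OF m1 s] Xt Yt one_plus_xflow_mult[OF X0 Y0 k1] ..
  also have "\<dots> = (1\<^sub>m n + Xm n p0 s * Ym n p0 s) * mat_block n ?E s s"
    unfolding one_plus_Xm_Ym_eq_block[OF m1 s] by (rule block_E) (use s in auto)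
  finally show "invertible_mat (1\<^sub>m n + Xm n (c t) s * Ym n (c t) s)"
    using p0 s invertible_mat_block_mexp[OF m1 km s]
    by (auto intro!: invertible_mat_mult simp: Mbullet_def Xm_def Ym_def)
  have "1\<^sub>m n + Ym n (c t) s * Xm n (c t) s = mat_block n ((1\<^sub>m ?N + ?Y0 * ?X0) * ?E) (cs m s) (cs m s)"
    unfolding one_plus_Ym_Xm_eq_block[OF m1 s] Xt Yt one_plus_mult_xflow[OF X0 Y0 k1] ..
  also have "\<dots> = (1\<^sub>m n + Ym n p0 s * Xm n p0 s) * mat_block n ?E (cs m s) (cs m s)"
    unfolding one_plus_Ym_Xm_eq_block[OF m1 s] by (rule block_E) (use css in auto)
  finally show "invertible_mat (1\<^sub>m n + Ym n (c t) s * Xm n (c t) s)"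
    using p0 s invertible_mat_block_mexp[OF m1 km css]
    by (auto intro!: invertible_mat_mult simp: Mbullet_def Xm_def Ym_def)
  fix a assume a: "1 \<le> a \<and> a \<le> d s"
  have "Vm n (c t) s a = Vm n p0 s a" "Wm n (c t) s a = Wm n p0 s a"
    using c s a unfolding explicit_flow_def by (auto intro!: eq_matI simp: Vm_def Wm_def)
  then show "invertible_mat (1\<^sub>m n + Wm n (c t) s a * Vm n (c t) s a)"
    and "1 + (Vm n (c t) s a * Wm n (c t) s a) $$ (0, 0) \<noteq> 0"
    using p0 s a unfolding Mbullet_def by auto
qed

theorem proposition3p3:
  fixes m n k0 :: nat and d :: "nat \<Rightarrow> nat" and p0 :: point
  assumes "m \<ge> 2" and "n \<ge> 1" and "d 0 \<ge> 1" and "k0 \<ge> 1"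
    and "p0 \<in> Mbullet m n d"
  defines "k \<equiv> k0 * m"
  shows
    "(\<forall>p\<in>Mbullet m n d. \<forall>g\<in>coords m n d.
        hamvf m n d (trYk m n k) p g =
          (case g of
             CX r i j \<Rightarrow> (- (bigY m n p ^\<^sub>m (k - 1)) - bigX m n p * bigY m n p ^\<^sub>m k)
                            $$ (r * n + i, cs m r * n + j)
           | _ \<Rightarrow> 0))
     \<and> (\<forall>c :: real \<Rightarrow> point.
          ((\<forall>g\<in>coords m n d. c 0 g = p0 g) \<and>
           (\<forall>t. \<forall>g\<in>coords m n d.
              ((\<lambda>s. c s g) has_vector_derivative hamvf m n d (trYk m n k) (c t) g) (at t)))
          \<longleftrightarrow>
          (\<forall>t. bigX m n (c t) =
                 bigX m n p0 * mexp ((- of_real t) \<cdot>\<^sub>m bigY m n p0 ^\<^sub>m k)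
                 + expm1_over k t (bigY m n p0)
             \<and> bigY m n (c t) = bigY m n p0
             \<and> (\<forall>s a j. CV s a j \<in> coords m n d \<longrightarrow> c t (CV s a j) = p0 (CV s a j))
             \<and> (\<forall>s a j. CW s a j \<in> coords m n d \<longrightarrow> c t (CW s a j) = p0 (CW s a j))))
     \<and> (\<forall>c :: real \<Rightarrow> point.
          (\<forall>t. bigX m n (c t) =
                 bigX m n p0 * mexp ((- of_real t) \<cdot>\<^sub>m bigY m n p0 ^\<^sub>m k)
                 + expm1_over k t (bigY m n p0)
             \<and> bigY m n (c t) = bigY m n p0
             \<and> (\<forall>s a j. CV s a j \<in> coords m n d \<longrightarrow> c t (CV s a j) = p0 (CV s a j))
             \<and> (\<forall>s a j. CW s a j \<in> coords m n d \<longrightarrow> c t (CW s a j) = p0 (CW s a j)))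
          \<longrightarrow> (\<forall>t. c t \<in> Mbullet m n d))"
proof -
  have m1: "m \<ge> 1" using assms(1) by simp
  have k1: "k \<ge> 1" unfolding k_def using assms(1,4) by (metis le_trans mult_le_mono one_le_numeral mult_1)
  have km: "k mod m = 0" unfolding k_def by simp
  have "integral_curve m n d (trYk m n k) p0 c \<longleftrightarrow> explicit_flow m n d k p0 c" for c
    using integral_curve_imp_explicit_flow[OF m1 k1 km] explicit_flow_imp_integral_curve[OF m1 k1 km]
    by blast
  then show ?thesis
    using explicit_flow_in_Mbullet[OF m1 k1 km assms(5)]
    unfolding integral_curve_def explicit_flow_def xflow_def
    by (intro conjI ballI allI impI hamvf_trYk[OF m1 k1]) blast+
qed

end
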